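(* Let $\alpha\in(0,1)$, $p>0$, and let $(X_k)_{k\ge1}$ be real numbers. For integers $l\ge0$, $r\ge0$ with $(l,r)\ne(0,0)$: $$S^{(1)}(l,r)=\sum_{f=1}^{r}\sum_{u=0}^{l-r}S^{(1)}_1(l,r,u,f),\qquad S^{(2)}(l,r)=\sum_{f=1}^{r}\sum_{u=0}^{l-r}S^{(2)}_1(l,r,u,f),$$ and, for all $l,r,u,f$ with $1\le f\le r$, $0\le u\le l-r$, $$S^{(1)}_1(l,r,u,f)=\alpha^{-1}\binom{r-1}{f-1}S^{(1)}_2(f+u,f)\,S^{(1)}(l-u-f,r-f),$$ $$S^{(2)}_1(l,r,u,f)=(1-\alpha)^{-1}\binom{r-1}{f-1}S^{(2)}_2(f+u,f)\,S^{(2)}(l-u-f,r-f).$$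
   Context: A closed walk of length $k$ is a sequence $w=(w_1,\dots,w_k,w_{k+1})$ of positive integers with $w_{k+1}=w_1$; its skeleton $G_w$ is the simple undirected graph with vertex set $V_w=\{w_1,\dots,w_k\}$ and edge set $E_w=\{\{w_i,w_{i+1}\}: 1\le i\le k\}$, and for $e\in E_w$, $n_w(e)$ is the number of indices $i$ with $\{w_i,w_{i+1}\}=e$. A walk is minimal if $w_1=1$ and each vertex appearing for the first time receives the number equal to the number of distinct vertices already visited plus $1$. An essential walk is a minimal closed walk whose skeleton is a tree (its length is then even, $2l$; the walk of length $0$, consisting of the single vertex $1$, is included). The root is $\rho=1$ and, for a walk of positive length, $\nu=w_2=2$. For an essential walk $w$, let $\beta(w)$ be the number of vertices of $G_w$ at even graph distance from the root, and define the weights $$\theta_1(w)=\alpha^{\beta(w)}(1-\alpha)^{|V_w|-\beta(w)}\prod_{e\in E_w}pX_{n_w(e)},\qquad \theta_2(w)=(1-\alpha)^{\beta(w)}\alpha^{|V_w|-\beta(w)}\prod_{e\in E_w}pX_{n_w(e)}.$$ Let $\Lambda(l,r)$ be the set of essential walks of length $2l$ having exactly $r$ steps that start at the root (i.e. $r=\#\{i\le 2l: w_i=1\}$), and $S^{(j)}(l,r)=\sum_{w\in\Lambda(l,r)}\theta_j(w)$, $j=1,2$. For an essential walk of positive length, removing the edge $\{1,2\}$ from $G_w$ leaves two trees; let $G_2$ be the one containing $2$. Let $u$ be half the number of steps of $w$ along edges of $G_2$ and $f$ the number of steps $1\to2$ of $w$. Let $\Lambda_1(l,r,u,f)$ be the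 set of walks in $\Lambda(l,r)$ with these parameters $u,f$, and $S^{(j)}_1(l,r,u,f)=\sum_{w\in\Lambda_1(l,r,u,f)}\theta_j(w)$. Let $\Lambda_2(l,r)$ be the set of walks in $\Lambda(l,r)$ whose skeleton has exactly one edge incident to the root, and $S^{(j)}_2(l,r)=\sum_{w\in\Lambda_2(l,r)}\theta_j(w)$. *)

theory Defs
  imports Complex_Main
begin

text \<open>A closed walk (w_1,...,w_k,w_{k+1}) is represented by the list
  [w_1,...,w_{k+1}] of positive naturals with last = first; its length is k.\<close>

definition closed_walk :: "nat list \<Rightarrow> bool" where
  "closed_walk w \<longleftrightarrow> w \<noteq> [] \<and> last w = hd w \<and> (\<forall>x\<in>set w. 0 < x)"

definition minimal_walk :: "nat list \<Rightarrow> bool" where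
  "minimal_walk w \<longleftrightarrow> closed_walk w \<and> hd w = 1 \<and>
     (\<forall>i<length w. w ! i \<notin> set (take i w) \<longrightarrow> w ! i = card (set (take i w)) + 1)"

definition wverts :: "nat list \<Rightarrow> nat set" where
  "wverts w = set w"

definition wedges :: "nat list \<Rightarrow> nat set set" where
  "wedges w = {{w ! i, w ! (i + 1)} | i. i + 1 < length w}"

definition nmult :: "nat list \<Rightarrow> nat set \<Rightarrow> nat" where
  "nmult w e = card {i. i + 1 < length w \<and> {w ! i, w ! (i + 1)} = e}"

definition adj :: "'a set set \<Rightarrow> ('a \<times> 'a) set" where
  "adj E = {(x, y). {x, y} \<in> E \<and> x \<noteq> y}"

definition simple_graph :: "'a set \<Rightarrow> 'a set set \<Rightarrow> bool" where
  "simple_graph V E \<longleftrightarrow> finite V \<and> (\<forall>e\<in>E. card e = 2 \<and> e \<subseteq> V)"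

definition connected_graph :: "'a set \<Rightarrow> 'a set set \<Rightarrow> bool" where
  "connected_graph V E \<longleftrightarrow> (\<forall>x\<in>V. \<forall>y\<in>V. (x, y) \<in> (adj E)\<^sup>*)"

definition has_cycle :: "'a set \<Rightarrow> 'a set set \<Rightarrow> bool" where
  "has_cycle V E \<longleftrightarrow> (\<exists>cs. 3 \<le> length cs \<and> distinct cs \<and> set cs \<subseteq> V \<and>
     (\<forall>i<length cs. {cs ! i, cs ! ((i + 1) mod length cs)} \<in> E))"

definition is_tree :: "'a set \<Rightarrow> 'a set set \<Rightarrow> bool" where
  "is_tree V E \<longleftrightarrow> V \<noteq> {} \<and> simple_graph V E \<and> connected_graph V E \<and> \<not> has_cycle V E"

definition gdist :: "'a set set \<Rightarrow> 'a \<Rightarrow> 'a \<Rightarrow> nat" where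
  "gdist E x y = (LEAST n. (x, y) \<in> (adj E) ^^ n)"

definition essential :: "nat list \<Rightarrow> bool" where
  "essential w \<longleftrightarrow> minimal_walk w \<and> is_tree (wverts w) (wedges w)"

definition beta :: "nat list \<Rightarrow> nat" where
  "beta w = card {v \<in> wverts w. even (gdist (wedges w) 1 v)}"

definition theta1 :: "real \<Rightarrow> real \<Rightarrow> (nat \<Rightarrow> real) \<Rightarrow> nat list \<Rightarrow> real" where
  "theta1 \<alpha> p X w = \<alpha> ^ beta w * (1 - \<alpha>) ^ (card (wverts w) - beta w) *
     (\<Prod>e\<in>wedges w. p * X (nmult w e))"

definition theta2 :: "real \<Rightarrow> real \<Rightarrow> (nat \<Rightarrow> real) \<Rightarrow> nat list \<Rightarrow> real" where
  "theta2 \<alpha> p X w = (1 - \<alpha>) ^ beta w * \<alpha> ^ (card (wverts w) - beta w) *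
     (\<Prod>e\<in>wedges w. p * X (nmult w e))"

definition Lam :: "nat \<Rightarrow> nat \<Rightarrow> nat list set" where
  "Lam l r = {w. essential w \<and> length w = 2 * l + 1 \<and> card {i. i < 2 * l \<and> w ! i = 1} = r}"

definition G2edges :: "nat list \<Rightarrow> nat set set" where
  "G2edges w = {e \<in> wedges w - {{1, 2}}. \<forall>x\<in>e. (2, x) \<in> (adj (wedges w - {{1, 2}}))\<^sup>*}"

definition Lam1 :: "nat \<Rightarrow> nat \<Rightarrow> nat \<Rightarrow> nat \<Rightarrow> nat list set" where
  "Lam1 l r u f = {w \<in> Lam l r. 0 < l \<and>
     2 * u = card {i. i < 2 * l \<and> {w ! i, w ! (i + 1)} \<in> G2edges w} \<and>
     f = card {i. i < 2 * l \<and> w ! i = 1 \<and> w ! (i + 1) = 2}}"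

definition Lam2 :: "nat \<Rightarrow> nat \<Rightarrow> nat list set" where
  "Lam2 l r = {w \<in> Lam l r. card {e \<in> wedges w. 1 \<in> e} = 1}"

definition Ssum :: "(nat list \<Rightarrow> real) \<Rightarrow> nat list set \<Rightarrow> real" where
  "Ssum \<theta> A = (\<Sum>w\<in>A. \<theta> w)"

end

theory Submission
  imports Defs
begin

text \<open>An essential walk returns to the root \<open>r\<close> times; its excursions that leave the root
  towards vertex \<open>2\<close> (\<open>f\<close> of them, the first excursion among them) traverse the edge \<open>{1, 2}\<close>
  and the subtree \<open>G\<^sub>2\<close>, the others avoid both. Concatenating each group of excursions and
  relabelling the vertices in order of appearance gives an essential walk in \<open>Lam2 (f + u) f\<close> and
  one in \<open>Lam (l - u - f) (r - f)\<close>; conversely the walk is recovered from these two by choosing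
  which of the last \<open>r - 1\<close> excursion slots are filled from the first walk, an \<open>(f - 1)\<close>-subset
  of \<open>{1..<r}\<close>. The two parts share only the root, which lies at even distance in all three trees,
  and their edge multisets are disjoint, so \<open>\<theta>\<^sub>1(w) \<alpha> = \<theta>\<^sub>1(w') \<theta>\<^sub>1(w'')\<close> and
  \<open>\<theta>\<^sub>2(w) (1 - \<alpha>) = \<theta>\<^sub>2(w') \<theta>\<^sub>2(w'')\<close>. Parities of distances from the root are read
  off positions: a tree walk alternates between the two colour classes of the tree.\<close>

section \<open>Paths and cycles in simple graphs\<close>

lemma rtrancl_distinct_path:
  assumes "(a, b) \<in> R\<^sup>*"
  shows "\<exists>xs. xs \<noteq> [] \<and> hd xs = a \<and> last xs = b \<and> distinct xs \<and>
    successively (\<lambda>x y. (x, y) \<in> R) xs"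
  using assms
proof (induction rule: converse_rtrancl_induct)
  case base
  show ?case by (intro exI[of _ "[b]"]) auto
next
  case (step x y)
  then obtain xs where xs: "xs \<noteq> []" "hd xs = y" "last xs = b" "distinct xs"
    "successively (\<lambda>x y. (x, y) \<in> R) xs" by blast
  show ?case
  proof (cases "x \<in> set xs")
    case True
    then obtain ys zs where "xs = ys @ x # zs" by (meson split_list)
    with xs show ?thesis by (intro exI[of _ "x # zs"]) (auto simp: successively_append_iff)
  next
    case False
    with xs step(1) show ?thesis by (intro exI[of _ "x # xs"]) (auto simp: successively_Cons)
  qed
qed

lemma adj_sym: "(x, y) \<in> adj E \<Longrightarrow> (y, x) \<in> adj E"
  by (auto simp: adj_def insert_commute)

lemma adj_rtrancl_sym: "(x, y) \<in> (adj E)\<^sup>* \<Longrightarrow> (y, x) \<in> (adj E)\<^sup>*"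
  by (induction rule: rtrancl_induct) (auto intro: converse_rtrancl_into_rtrancl adj_sym)

lemma adj_rtrancl_mono: "E \<subseteq> F \<Longrightarrow> (x, y) \<in> (adj E)\<^sup>* \<Longrightarrow> (x, y) \<in> (adj F)\<^sup>*"
  by (erule rtrancl_mono[THEN subsetD, rotated]) (auto simp: adj_def)

lemma rtrancl_nth_chain:
  assumes "\<And>t. m \<le> t \<Longrightarrow> t < k \<Longrightarrow> (w ! t, w ! (t+1)) \<in> R \<or> w ! t = w ! (t+1)"
    and "m \<le> k"
  shows "(w ! m, w ! k) \<in> R\<^sup>*"
  using assms
proof (induction k)
  case (Suc k)
  show ?case
  proof (cases "m = Suc k")
    case False
    with Suc have "(w ! m, w ! k) \<in> R\<^sup>*" "(w ! k, w ! Suc k) \<in> R \<or> w ! k = w ! Suc k" by auto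
    then show ?thesis by (auto intro: rtrancl_into_rtrancl)
  qed simp
qed simp

lemma has_cycle_if_path_avoiding_edge:
  assumes sg: "simple_graph V E" and ab: "{a, b} \<in> E" "a \<noteq> b"
    and path: "(a, b) \<in> (adj (E - {{a, b}}))\<^sup>*"
  shows "has_cycle V E"
proof -
  obtain xs where xs: "xs \<noteq> []" "hd xs = a" "last xs = b" "distinct xs"
    and succ: "successively (\<lambda>x y. (x, y) \<in> adj (E - {{a, b}})) xs"
    using rtrancl_distinct_path[OF path] by blast
  let ?n = "length xs"
  have step: "{xs ! i, xs ! Suc i} \<in> E - {{a, b}}" "xs ! i \<noteq> xs ! Suc i" if "Suc i < ?n" for i
    using successively_nth[OF succ that] by (auto simp: adj_def)
  have first: "xs ! 0 = a" and last: "xs ! (?n - 1) = b"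
    using xs by (simp_all add: hd_conv_nth last_conv_nth)
  have "?n \<noteq> 1" using first last ab(2) by auto
  moreover have "?n \<noteq> 2" using step[of 0] first last by auto
  ultimately have n3: "3 \<le> ?n" using xs(1) by (cases ?n) auto
  have closing: "{xs ! i, xs ! ((i + 1) mod ?n)} \<in> E" if "i < ?n" for i
  proof (cases "Suc i < ?n")
    case False
    with that have "Suc i = ?n" "i = ?n - 1" by simp_all
    with first last ab(1) show ?thesis by (simp add: insert_commute)
  qed (use step in auto)
  have "set xs \<subseteq> V"
  proof
    fix x assume "x \<in> set xs"
    then obtain i where "i < ?n" "xs ! i = x" by (auto simp: in_set_conv_nth)
    with closing[of i] sg show "x \<in> V" by (auto simp: simple_graph_def)
  qed
  with n3 xs(4) closing show ?thesis unfolding has_cycle_def by blast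
qed

lemma has_cycle_imp_path_avoiding_edge:
  assumes "has_cycle V E"
  shows "\<exists>a b. {a, b} \<in> E \<and> a \<noteq> b \<and> (a, b) \<in> (adj (E - {{a, b}}))\<^sup>*"
proof -
  obtain cs where n3: "3 \<le> length cs" and dist: "distinct cs"
    and cyc: "\<And>i. i < length cs \<Longrightarrow> {cs ! i, cs ! ((i + 1) mod length cs)} \<in> E"
    using assms unfolding has_cycle_def by blast
  let ?n = "length cs" and ?e = "{cs ! 1, cs ! 0}"
  have ne: "cs ! i \<noteq> cs ! j" if "i < ?n" "j < ?n" "i \<noteq> j" for i j
    using that dist by (simp add: nth_eq_iff_index_eq)
  have step: "(cs ! k, cs ! ((k + 1) mod ?n)) \<in> adj (E - {?e})" if k: "1 \<le> k" "k < ?n" for k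
  proof -
    define k' where "k' = (k + 1) mod ?n"
    have "cs ! k \<noteq> cs ! k' \<and> (cs ! k \<notin> ?e \<or> cs ! k' \<notin> ?e)"
    proof (cases "k + 1 = ?n")
      case True
      then have "k' = 0" "2 \<le> k" using n3 by (auto simp: k'_def)
      moreover have "cs ! k \<noteq> cs ! 0" "cs ! k \<noteq> cs ! 1"
        using k \<open>2 \<le> k\<close> n3 by (intro ne; linarith)+
      ultimately show ?thesis by auto
    next
      case False
      then have "k' = k + 1" "k + 1 < ?n" using k by (auto simp: k'_def)
      moreover have "cs ! k \<noteq> cs ! (k + 1)" "cs ! (k + 1) \<noteq> cs ! 0" "cs ! (k + 1) \<noteq> cs ! 1"
        using k \<open>k + 1 < ?n\<close> n3 by (intro ne; linarith)+
      ultimately show ?thesis by auto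
    qed
    with cyc[OF k(2)] show ?thesis by (auto simp: adj_def k'_def)
  qed
  let ?ys = "cs @ [cs ! 0]"
  have ys: "?ys ! k = cs ! (k mod ?n)" if "k \<le> ?n" for k
    using that by (cases "k = ?n") (auto simp: nth_append)
  have "(?ys ! 1, ?ys ! ?n) \<in> (adj (E - {?e}))\<^sup>*"
    by (rule rtrancl_nth_chain) (use n3 step in \<open>auto simp: ys mod_Suc\<close>)
  then have "(cs ! 1, cs ! 0) \<in> (adj (E - {?e}))\<^sup>*" using n3 by (simp add: nth_append)
  moreover have "?e \<in> E" using cyc[of 0] n3 by (force simp: insert_commute)
  moreover have "cs ! 1 \<noteq> cs ! 0" using n3 by (intro ne) auto
  ultimately show ?thesis by blast
qed
lemma has_cycle_mono: "has_cycle V E \<Longrightarrow> V \<subseteq> V' \<Longrightarrow> E \<subseteq> E' \<Longrightarrow> has_cycle V' E'"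
  unfolding has_cycle_def by blast

lemma has_cycle_image:
  assumes inj: "inj_on g V" and cyc: "has_cycle V E"
  shows "has_cycle (g ` V) ((`) g ` E)"
proof -
  obtain cs where cs: "3 \<le> length cs" "distinct cs" "set cs \<subseteq> V"
    and edges: "\<forall>i<length cs. {cs ! i, cs ! ((i + 1) mod length cs)} \<in> E"
    using cyc unfolding has_cycle_def by blast
  have "(i + 1) mod length cs < length cs" for i using cs(1) by (intro mod_less_divisor) auto
  with edges have "\<forall>i<length cs. {map g cs ! i, map g cs ! ((i + 1) mod length cs)} \<in> (`) g ` E"
    by (auto intro: rev_image_eqI)
  moreover have "distinct (map g cs)" using cs inj by (simp add: distinct_map inj_on_subset)
  ultimately show ?thesis using cs unfolding has_cycle_def by (intro exI[of _ "map g cs"]) auto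
qed

lemma rtrancl_collapse:
  assumes "(a, b) \<in> R\<^sup>*" and "\<And>x y. (x, y) \<in> R \<Longrightarrow> \<rho> x = \<rho> y \<or> (\<rho> x, \<rho> y) \<in> S"
  shows "(\<rho> a, \<rho> b) \<in> S\<^sup>*"
  using assms(1)
proof (induction rule: rtrancl_induct)
  case (step y z)
  then show ?case using assms(2)[of y z] rtrancl_into_rtrancl by metis
qed auto

lemma no_path_avoiding_edge_Un:
  assumes sg1: "simple_graph V1 E1" and sg2: "simple_graph V2 E2" and cut: "V1 \<inter> V2 \<subseteq> {c}"
    and acyclic: "\<not> has_cycle V1 E1" and ab: "{a, b} \<in> E1" "a \<noteq> b"
  shows "(a, b) \<notin> (adj (E1 \<union> E2 - {{a, b}}))\<^sup>*"
proof
  assume path: "(a, b) \<in> (adj (E1 \<union> E2 - {{a, b}}))\<^sup>*"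
  \<comment> \<open>collapsing every vertex outside \<open>V1\<close> onto the cut vertex gives a path in the first graph\<close>
  define \<rho> where "\<rho> x = (if x \<in> V1 then x else c)" for x
  have "(\<rho> a, \<rho> b) \<in> (adj (E1 - {{a, b}}))\<^sup>*"
  proof (rule rtrancl_collapse[OF path])
    fix x y assume "(x, y) \<in> adj (E1 \<union> E2 - {{a, b}})"
    then have xy: "{x, y} \<in> E1 \<union> E2" "{x, y} \<noteq> {a, b}" "x \<noteq> y" by (auto simp: adj_def)
    show "\<rho> x = \<rho> y \<or> (\<rho> x, \<rho> y) \<in> adj (E1 - {{a, b}})"
    proof (cases "{x, y} \<in> E1")
      case True
      with sg1 have "x \<in> V1" "y \<in> V1" by (auto simp: simple_graph_def)
      with True xy show ?thesis by (auto simp: \<rho>_def adj_def)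
    next
      case False
      with xy sg2 have "x \<in> V2" "y \<in> V2" by (auto simp: simple_graph_def)
      with cut show ?thesis by (auto simp: \<rho>_def)
    qed
  qed
  moreover have "a \<in> V1" "b \<in> V1" using ab sg1 by (auto simp: simple_graph_def)
  ultimately have "(a, b) \<in> (adj (E1 - {{a, b}}))\<^sup>*" by (simp add: \<rho>_def)
  with has_cycle_if_path_avoiding_edge[OF sg1 ab] acyclic show False by blast
qed

lemma no_cycle_Un_cut_vertex:
  assumes sg1: "simple_graph V1 E1" and sg2: "simple_graph V2 E2" and cut: "V1 \<inter> V2 \<subseteq> {c}"
    and "\<not> has_cycle V1 E1" and "\<not> has_cycle V2 E2"
  shows "\<not> has_cycle (V1 \<union> V2) (E1 \<union> E2)"
proof
  assume "has_cycle (V1 \<union> V2) (E1 \<union> E2)"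
  then obtain a b where ab: "{a, b} \<in> E1 \<union> E2" "a \<noteq> b"
    and path: "(a, b) \<in> (adj (E1 \<union> E2 - {{a, b}}))\<^sup>*"
    using has_cycle_imp_path_avoiding_edge by blast
  have "E2 \<union> E1 = E1 \<union> E2" "V2 \<inter> V1 \<subseteq> {c}" using cut by auto
  with ab path no_path_avoiding_edge_Un[OF sg1 sg2 cut] no_path_avoiding_edge_Un[OF sg2 sg1]
  show False using assms(4,5) by (metis Un_iff)
qed

section \<open>Walks and their skeletons\<close>

definition steps :: "'a list \<Rightarrow> ('a \<times> 'a) list" where
  "steps w = zip w (tl w)"

definition edge_of :: "'a \<times> 'a \<Rightarrow> 'a set" where
  "edge_of p = {fst p, snd p}"

lemma length_steps[simp]: "length (steps w) = length w - 1"
  by (simp add: steps_def)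

lemma nth_steps: "i + 1 < length w \<Longrightarrow> steps w ! i = (w ! i, w ! (i+1))"
  by (simp add: steps_def nth_tl)

lemma set_steps: "set (steps w) = {(w ! i, w ! (i+1)) | i. i + 1 < length w}"
  unfolding steps_def set_zip by (auto simp: nth_tl)

lemma wedges_steps: "wedges w = edge_of ` set (steps w)"
  unfolding wedges_def set_steps edge_of_def by force

lemma steps_Cons_Cons[simp]: "steps (a # b # xs) = (a, b) # steps (b # xs)"
  by (simp add: steps_def)

lemma steps_single[simp]: "steps [a] = []" and steps_Nil[simp]: "steps [] = []"
  by (simp_all add: steps_def)

lemma steps_map: "steps (map g w) = map (map_prod g g) (steps w)"
  by (induction w rule: induct_list012) auto

lemma edge_of_map: "edge_of (map_prod g g p) = g ` edge_of p"
  by (cases p) (simp add: edge_of_def)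

lemma wedges_map: "wedges (map g w) = (`) g ` wedges w"
  by (simp add: wedges_steps steps_map image_image edge_of_map)

lemma steps_memD: "p \<in> set (steps w) \<Longrightarrow> fst p \<in> set w \<and> snd p \<in> set w"
  unfolding set_steps by auto

lemma wedges_subset: "e \<in> wedges w \<Longrightarrow> e \<subseteq> set w"
  unfolding wedges_steps edge_of_def using steps_memD by fastforce

definition step_edges :: "'a list \<Rightarrow> 'a set list" where
  "step_edges w = map edge_of (steps w)"

lemma nmult_eq_count_step_edges: "nmult w e = count_list (step_edges w) e"
proof -
  have "count_list (step_edges w) e = card {i. i < length (step_edges w) \<and> step_edges w ! i = e}"
    by (simp add: count_list_eq_length_filter length_filter_conv_card eq_commute)
  also have "\<dots> = card {i. i + 1 < length w \<and> {w ! i, w ! (i + 1)} = e}"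
    by (rule arg_cong[where f = card]) (auto simp: step_edges_def nth_steps edge_of_def)
  finally show ?thesis by (simp add: nmult_def)
qed

lemma set_step_edges: "set (step_edges w) = wedges w"
  by (simp add: step_edges_def wedges_steps)

lemma step_edges_map: "step_edges (map g w) = map ((`) g) (step_edges w)"
  by (simp add: step_edges_def steps_map edge_of_map)

lemma step_in_wedges: "t + 1 < length w \<Longrightarrow> {w ! t, w ! (t+1)} \<in> wedges w"
  by (auto simp: wedges_def)

lemma walk_reach: "m \<le> k \<Longrightarrow> k < length w \<Longrightarrow> (w ! m, w ! k) \<in> (adj (wedges w))\<^sup>*"
  by (rule rtrancl_nth_chain) (auto simp: adj_def wedges_def)

lemma connected_graph_walk:
  assumes "w \<noteq> []" shows "connected_graph (set w) (wedges w)"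
  unfolding connected_graph_def
proof (intro ballI)
  fix x y assume "x \<in> set w" "y \<in> set w"
  then obtain i j where i: "i < length w" "w ! i = x" and j: "j < length w" "w ! j = y"
    by (auto simp: in_set_conv_nth)
  have "(w ! 0, x) \<in> (adj (wedges w))\<^sup>*" using walk_reach[of 0 i w] i by simp
  moreover have "(w ! 0, y) \<in> (adj (wedges w))\<^sup>*" using walk_reach[of 0 j w] j by simp
  ultimately show "(x, y) \<in> (adj (wedges w))\<^sup>*"
    by (meson adj_rtrancl_sym rtrancl_trans)
qed

definition loop_free :: "'a list \<Rightarrow> bool" where
  "loop_free w \<longleftrightarrow> (\<forall>p\<in>set (steps w). fst p \<noteq> snd p)"

lemma simple_graph_walk_iff: "simple_graph (set w) (wedges w) \<longleftrightarrow> loop_free w"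
  unfolding simple_graph_def loop_free_def wedges_steps edge_of_def
  using steps_memD by (fastforce simp: card_insert_if)

definition tree_walk :: "nat list \<Rightarrow> bool" where
  "tree_walk w \<longleftrightarrow> is_tree (set w) (wedges w)"

lemma tree_walk_iff: "w \<noteq> [] \<Longrightarrow> tree_walk w \<longleftrightarrow> loop_free w \<and> \<not> has_cycle (set w) (wedges w)"
  unfolding tree_walk_def is_tree_def using connected_graph_walk simple_graph_walk_iff by auto

lemma loop_free_map: "inj_on g (set w) \<Longrightarrow> loop_free (map g w) \<longleftrightarrow> loop_free w"
  unfolding loop_free_def steps_map using steps_memD
  by (fastforce simp: inj_on_def)

lemma tree_walk_map:
  assumes inj: "inj_on g (set w)" and ne: "w \<noteq> []"
  shows "tree_walk (map g w) \<longleftrightarrow> tree_walk w"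
proof -
  have "has_cycle (set (map g w)) (wedges (map g w)) \<longleftrightarrow> has_cycle (set w) (wedges w)"
  proof
    assume "has_cycle (set w) (wedges w)"
    then show "has_cycle (set (map g w)) (wedges (map g w))"
      using has_cycle_image[OF inj] by (simp add: wedges_map)
  next
    assume c: "has_cycle (set (map g w)) (wedges (map g w))"
    define h where "h = inv_into (set w) g"
    have inj2: "inj_on h (g ` set w)" using inj by (simp add: h_def inj_on_inv_into)
    have "has_cycle (h ` g ` set w) ((`) h ` (`) g ` wedges w)"
      using has_cycle_image[OF inj2] c by (simp add: wedges_map)
    moreover have "h ` g ` set w = set w" using inj by (simp add: h_def)
    moreover have "(`) h ` (`) g ` wedges w = wedges w"
    proof -
      have "h ` g ` e = e" if "e \<in> wedges w" for e
        using wedges_subset[OF that] inj by (simp add: h_def image_image inv_into_f_f subset_iff cong: image_cong)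
      then show ?thesis by (force simp: image_image)
    qed
    ultimately show "has_cycle (set w) (wedges w)" by simp
  qed
  then show ?thesis using tree_walk_iff ne loop_free_map[OF inj] by (metis Nil_is_map_conv)
qed

lemma tree_walk_subwalk:
  assumes "tree_walk w" "w \<noteq> []" "v \<noteq> []" "set (steps v) \<subseteq> set (steps w)" "set v \<subseteq> set w"
  shows "tree_walk v"
proof -
  have "wedges v \<subseteq> wedges w" using assms(4) by (auto simp: wedges_steps)
  then show ?thesis using assms tree_walk_iff has_cycle_mono unfolding loop_free_def by (metis subsetD)
qed

lemma essentialD:
  assumes "essential w"
  shows "w \<noteq> []" "hd w = 1" "last w = 1" "w ! 0 = 1" "tree_walk w" "closed_walk w" "minimal_walk w"
proof -
  show mw: "minimal_walk w" using assms by (simp add: essential_def)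
  show cw: "closed_walk w" using mw by (simp add: minimal_walk_def)
  show ne: "w \<noteq> []" using cw by (simp add: closed_walk_def)
  show h: "hd w = 1" using mw by (simp add: minimal_walk_def)
  show "last w = 1" using cw h by (simp add: closed_walk_def)
  show "w ! 0 = 1" using h ne by (simp add: hd_conv_nth)
  show "tree_walk w" using assms by (simp add: essential_def tree_walk_def wverts_def)
qed

lemma essential_pos: "essential w \<Longrightarrow> x \<in> set w \<Longrightarrow> x \<ge> 1"
  using essentialD(6) by (fastforce simp: closed_walk_def)

section \<open>Parity in tree walks\<close>

lemma nth_in_take: "j < i \<Longrightarrow> j < length w \<Longrightarrow> w ! j \<in> set (take i w)"
  by (auto simp: in_set_conv_nth intro!: exI[of _ j])

lemma loop_free_nth: "loop_free w \<Longrightarrow> k + 1 < length w \<Longrightarrow> w ! k \<noteq> w ! (k+1)"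
proof -
  assume "loop_free w" "k + 1 < length w"
  moreover have "(w ! k, w ! (k+1)) \<in> set (steps w)" using \<open>k + 1 < length w\<close> unfolding set_steps by blast
  ultimately show ?thesis unfolding loop_free_def by fastforce
qed

lemma new_edge_new_vertex:
  assumes tr: "tree_walk w" and k: "k + 1 < length w"
    and new: "\<forall>m<k. {w ! m, w ! (m+1)} \<noteq> {w ! k, w ! (k+1)}"
  shows "w ! (k+1) \<notin> set (take (k+1) w)"
proof
  assume "w ! (k+1) \<in> set (take (k+1) w)"
  then obtain j where j: "j < k + 1" "w ! j = w ! (k+1)"
    using k by (auto simp: in_set_conv_nth)
  have ne: "w \<noteq> []" using k by auto
  have nl: "loop_free w" and nc: "\<not> has_cycle (set w) (wedges w)" using tr tree_walk_iff ne by auto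
  define x where "x = w ! k"
  define y where "y = w ! (k+1)"
  have xy: "x \<noteq> y" using loop_free_nth[OF nl k] by (simp add: x_def y_def)
  have "(w ! j, w ! k) \<in> (adj (wedges w - {{y, x}}))\<^sup>*"
  proof (rule rtrancl_nth_chain)
    fix t assume t: "j \<le> t" "t < k"
    have "{w ! t, w ! (t+1)} \<in> wedges w" using t k by (intro step_in_wedges) simp
    moreover have "{w ! t, w ! (t+1)} \<noteq> {y, x}" using new t by (auto simp: x_def y_def insert_commute)
    ultimately show "(w ! t, w ! (t+1)) \<in> adj (wedges w - {{y, x}}) \<or> w ! t = w ! (t+1)"
      by (auto simp: adj_def)
  qed (use j in simp)
  then have "(y, x) \<in> (adj (wedges w - {{y, x}}))\<^sup>*" using j by (simp add: x_def y_def)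
  moreover have "{y, x} \<in> wedges w" using step_in_wedges[OF k] by (simp add: x_def y_def insert_commute)
  moreover have "simple_graph (set w) (wedges w)" using nl simple_graph_walk_iff by blast
  ultimately have "has_cycle (set w) (wedges w)" using has_cycle_if_path_avoiding_edge xy by metis
  then show False using nc by simp
qed

definition first_idx :: "'a list \<Rightarrow> 'a \<Rightarrow> nat" where
  "first_idx w x = (LEAST j. j < length w \<and> w ! j = x)"

lemma first_idx_props:
  assumes "i < length w"
  shows "first_idx w (w ! i) \<le> i" "first_idx w (w ! i) < length w" "w ! first_idx w (w ! i) = w ! i"
proof -
  have P: "i < length w \<and> w ! i = w ! i" using assms by simp
  show "first_idx w (w ! i) \<le> i" unfolding first_idx_def by (rule Least_le) (rule P)
  have "first_idx w (w ! i) < length w \<and> w ! first_idx w (w ! i) = w ! i" unfolding first_idx_def by (rule LeastI) (rule P)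
  then show "first_idx w (w ! i) < length w" "w ! first_idx w (w ! i) = w ! i" by auto
qed

text \<open>A step of a tree walk either reaches a new vertex or retraces an edge already used, so
  the parity of the position of a vertex in the walk is that of its first occurrence.\<close>

lemma tree_walk_parity:
  assumes tr: "tree_walk w"
  shows "i < length w \<Longrightarrow> even i \<longleftrightarrow> even (first_idx w (w ! i))"
proof (induction i rule: less_induct)
  case (less i)
  show ?case
  proof (cases i)
    case 0
    then show ?thesis using first_idx_props[of 0 w] less.prems by simp
  next
    case (Suc k)
    have k: "k + 1 < length w" using less.prems Suc by simp
    have ne: "w \<noteq> []" using k by auto
    have nl: "loop_free w" using tr tree_walk_iff ne by auto
    have xy: "w ! k \<noteq> w ! (k+1)" using loop_free_nth[OF nl k] .
    have IHk: "even k \<longleftrightarrow> even (first_idx w (w ! k))" using less.IH[of k] Suc k by simp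
    show ?thesis
    proof (cases "first_idx w (w ! (k+1)) = k + 1")
      case True then show ?thesis using Suc by simp
    next
      case False
      then have lt: "first_idx w (w ! (k+1)) < k + 1" using first_idx_props(1)[OF k] by simp
      have "w ! (k+1) \<in> set (take (k+1) w)"
        using nth_in_take[OF lt, of w] first_idx_props(2,3)[OF k] by simp
      then obtain m where m: "m < k" "{w ! m, w ! (m+1)} = {w ! k, w ! (k+1)}"
        using new_edge_new_vertex[OF tr k] by blast
      have IHm: "even m \<longleftrightarrow> even (first_idx w (w ! m))" using less.IH[of m] m Suc k by simp
      have IHm1: "even (m+1) \<longleftrightarrow> even (first_idx w (w ! (m+1)))" using less.IH[of "m+1"] m Suc k by simp
      from m(2) xy IHk IHm IHm1 show ?thesis
        unfolding Suc by (auto simp: doubleton_eq_iff)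
    qed
  qed
qed

lemma tree_walk_same_vertex_parity:
  assumes "tree_walk w" "i < length w" "j < length w" "w ! i = w ! j"
  shows "even i \<longleftrightarrow> even j"
  using tree_walk_parity[OF assms(1) assms(2)] tree_walk_parity[OF assms(1) assms(3)] assms(4) by simp

lemma tree_walk_edge_parity:
  assumes tr: "tree_walk w" and e: "{y, z} \<in> wedges w" and yz: "y \<noteq> z"
  shows "even (first_idx w y) \<longleftrightarrow> \<not> even (first_idx w z)"
proof -
  obtain t where t: "t + 1 < length w" "{y, z} = {w ! t, w ! (t+1)}"
    using e unfolding wedges_def by blast
  have c1: "even t \<longleftrightarrow> even (first_idx w (w ! t))" using tree_walk_parity[OF tr, of t] t by simp
  have c2: "even (t+1) \<longleftrightarrow> even (first_idx w (w ! (t+1)))" using tree_walk_parity[OF tr, of "t+1"] t by simp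
  from t(2) yz have "(y = w ! t \<and> z = w ! (t+1)) \<or> (y = w ! (t+1) \<and> z = w ! t)"
    by (auto simp: doubleton_eq_iff)
  then show ?thesis using c1 c2 by auto
qed

lemma relpow_parity:
  assumes tr: "tree_walk w" and h: "w ! 0 = v0" "w \<noteq> []"
  shows "(v0, z) \<in> adj (wedges w) ^^ n \<Longrightarrow> z \<in> set w \<and> (even n \<longleftrightarrow> even (first_idx w z))"
proof (induction n arbitrary: z)
  case 0
  then have "z = w ! 0" using h by simp
  moreover have "w ! 0 \<in> set w" using h(2) by simp
  ultimately show ?case using first_idx_props[of 0 w] h by simp
next
  case (Suc n)
  then obtain y where y: "(v0, y) \<in> adj (wedges w) ^^ n" "(y, z) \<in> adj (wedges w)" by auto
  have yz: "{y, z} \<in> wedges w" "y \<noteq> z" using y(2) by (auto simp: adj_def)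
  have "z \<in> set w" using wedges_subset[OF yz(1)] by simp
  moreover have "even (first_idx w y) \<longleftrightarrow> \<not> even (first_idx w z)" using tree_walk_edge_parity[OF tr yz] .
  ultimately show ?case using Suc.IH[OF y(1)] by simp
qed

lemma even_gdist_iff:
  assumes tr: "tree_walk w" and h: "w ! 0 = v0" "w \<noteq> []" and i: "i < length w"
  shows "even (gdist (wedges w) v0 (w ! i)) \<longleftrightarrow> even i"
proof -
  have "(w ! 0, w ! i) \<in> (adj (wedges w))\<^sup>*" using walk_reach[of 0 i w] i by simp
  then obtain n where "(v0, w ! i) \<in> adj (wedges w) ^^ n" using h rtrancl_power by metis
  then have "(v0, w ! i) \<in> adj (wedges w) ^^ gdist (wedges w) v0 (w ! i)"
    unfolding gdist_def by (rule LeastI)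
  then have "even (gdist (wedges w) v0 (w ! i)) \<longleftrightarrow> even (first_idx w (w ! i))"
    using relpow_parity[OF tr h] by blast
  also have "\<dots> \<longleftrightarrow> even i" using tree_walk_parity[OF tr i] by simp
  finally show ?thesis .
qed

definition even_pos :: "'a list \<Rightarrow> 'a set" where
  "even_pos xs = {xs ! i | i. i < length xs \<and> even i}"

definition odd_pos :: "'a list \<Rightarrow> 'a set" where
  "odd_pos xs = {xs ! i | i. i < length xs \<and> odd i}"

lemma beta_eq_card_even_pos:
  assumes tr: "tree_walk w" and h: "w ! 0 = 1" "w \<noteq> []"
  shows "beta w = card (even_pos w)"
proof -
  have "{v \<in> wverts w. even (gdist (wedges w) 1 v)} = even_pos w"
  proof (intro set_eqI iffI)
    fix v assume "v \<in> {v \<in> wverts w. even (gdist (wedges w) 1 v)}"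
    then obtain i where "i < length w" "w ! i = v" "even (gdist (wedges w) 1 v)"
      by (auto simp: wverts_def in_set_conv_nth)
    then show "v \<in> even_pos w" using even_gdist_iff[OF tr h] unfolding even_pos_def by blast
  next
    fix v assume "v \<in> even_pos w"
    then obtain i where "i < length w" "w ! i = v" "even i" unfolding even_pos_def by blast
    then show "v \<in> {v \<in> wverts w. even (gdist (wedges w) 1 v)}"
      using even_gdist_iff[OF tr h] by (auto simp: wverts_def)
  qed
  then show ?thesis by (simp add: beta_def)
qed

lemma even_pos_Cons: "even_pos (x # xs) = insert x (odd_pos xs)"
proof -
  have "even_pos (x # xs) = {(x # xs) ! i | i. i < Suc (length xs) \<and> even i}" by (simp add: even_pos_def)
  also have "\<dots> = insert x {xs ! i | i. i < length xs \<and> odd i}"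
  proof (intro set_eqI iffI)
    fix v assume "v \<in> {(x # xs) ! i | i. i < Suc (length xs) \<and> even i}"
    then obtain i where i: "i < Suc (length xs)" "even i" "v = (x # xs) ! i" by blast
    then show "v \<in> insert x {xs ! i | i. i < length xs \<and> odd i}"
      by (cases i) auto
  next
    fix v assume "v \<in> insert x {xs ! i | i. i < length xs \<and> odd i}"
    then show "v \<in> {(x # xs) ! i | i. i < Suc (length xs) \<and> even i}"
    proof
      assume "v = x" then show ?thesis by force
    next
      assume "v \<in> {xs ! i | i. i < length xs \<and> odd i}"
      then obtain i where "i < length xs" "odd i" "v = xs ! i" by blast
      then show ?thesis by (intro CollectI exI[of _ "Suc i"]) auto
    qed
  qed
  finally show ?thesis by (simp add: odd_pos_def)
qed

lemma odd_pos_append: "even (length xs) \<Longrightarrow> odd_pos (xs @ ys) = odd_pos xs \<union> odd_pos ys"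
proof (intro set_eqI iffI)
  fix v assume ev: "even (length xs)" and "v \<in> odd_pos (xs @ ys)"
  then obtain i where i: "i < length xs + length ys" "odd i" "v = (xs @ ys) ! i" unfolding odd_pos_def by auto
  show "v \<in> odd_pos xs \<union> odd_pos ys"
  proof (cases "i < length xs")
    case True then show ?thesis using i by (auto simp: odd_pos_def nth_append)
  next
    case False
    then have "v = ys ! (i - length xs)" "i - length xs < length ys" "odd (i - length xs)"
      using i ev by (auto simp: nth_append)
    then show ?thesis unfolding odd_pos_def by blast
  qed
next
  fix v assume ev: "even (length xs)" and vv: "v \<in> odd_pos xs \<union> odd_pos ys"
  consider "v \<in> odd_pos xs" | "v \<in> odd_pos ys" using vv by blast
  then show "v \<in> odd_pos (xs @ ys)"
  proof cases
    case 1
    then have "v \<in> odd_pos xs" .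
    then obtain i where "i < length xs" "odd i" "v = xs ! i" unfolding odd_pos_def by auto
    then show ?thesis unfolding odd_pos_def by (intro CollectI exI[of _ i]) (auto simp: nth_append)
  next
    case 2
    then obtain i where "i < length ys" "odd i" "v = ys ! i" unfolding odd_pos_def by auto
    then show ?thesis unfolding odd_pos_def using ev
      by (intro CollectI exI[of _ "i + length xs"]) (auto simp: nth_append)
  qed
qed

lemma odd_pos_Nil[simp]: "odd_pos [] = {}" by (simp add: odd_pos_def)

lemma odd_pos_concat: "(\<forall>e\<in>set es. even (length e)) \<Longrightarrow> odd_pos (concat es) = \<Union> (odd_pos ` set es)"
  by (induction es) (auto simp: odd_pos_append)

lemma even_pos_map: "even_pos (map g xs) = g ` even_pos xs"
proof -
  have "even_pos (map g xs) = {g (xs ! i) | i. i < length xs \<and> even i}" unfolding even_pos_def by (metis length_map nth_map)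
  also have "\<dots> = g ` even_pos xs" unfolding even_pos_def by blast
  finally show ?thesis .
qed

lemma even_pos_subset: "even_pos xs \<subseteq> set xs"
  unfolding even_pos_def by auto

section \<open>Canonical relabelling\<close>

definition rank :: "'a list \<Rightarrow> 'a \<Rightarrow> nat" where
  "rank w x = card (set (takeWhile (\<lambda>y. y \<noteq> x) w)) + 1"

definition canon :: "'a list \<Rightarrow> nat list" where
  "canon w = map (rank w) w"

lemma length_takeWhile_neq_less:
  assumes "x \<in> set w" shows "length (takeWhile (\<lambda>y. y \<noteq> x) w) < length w"
proof (rule ccontr)
  assume "\<not> ?thesis"
  then have "length (takeWhile (\<lambda>y. y \<noteq> x) w) = length w"
    using length_takeWhile_le[of _ w] by (simp add: le_antisym)
  then have "takeWhile (\<lambda>y. y \<noteq> x) w = w" by (metis takeWhile_eq_take take_all_iff order_refl)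
  then show False using assms by (metis set_takeWhileD)
qed

lemma rank_less:
  assumes x: "x \<in> set w" and less: "length (takeWhile (\<lambda>z. z \<noteq> x) w) < length (takeWhile (\<lambda>z. z \<noteq> y) w)"
  shows "rank w x < rank w y"
proof -
  define tx where "tx = takeWhile (\<lambda>z. z \<noteq> x) w"
  define ty where "ty = takeWhile (\<lambda>z. z \<noteq> y) w"
  have tx: "tx = take (length tx) w" and ty: "ty = take (length ty) w"
    by (simp_all add: tx_def ty_def takeWhile_eq_take[symmetric])
  have "set tx \<subseteq> set ty" using tx ty less by (metis set_take_subset_set_take less_imp_le tx_def ty_def)
  moreover have "x \<in> set ty"
  proof -
    have "w ! length tx = x"
      using nth_length_takeWhile length_takeWhile_neq_less[OF x] unfolding tx_def by fastforce
    moreover have "length ty \<le> length w" unfolding ty_def by (rule length_takeWhile_le)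
    ultimately show ?thesis using nth_in_take[of "length tx" "length ty" w] ty less
      by (simp add: tx_def ty_def)
  qed
  moreover have "x \<notin> set tx" unfolding tx_def by (auto dest: set_takeWhileD)
  ultimately have "set tx \<subset> set ty" by blast
  then show ?thesis unfolding rank_def by (simp add: psubset_card_mono tx_def ty_def)
qed

lemma inj_on_rank: "inj_on (rank w) (set w)"
proof (rule inj_onI, rule ccontr)
  fix x y assume x: "x \<in> set w" and y: "y \<in> set w" and eq: "rank w x = rank w y" and "x \<noteq> y"
  have "w ! length (takeWhile (\<lambda>z. z \<noteq> v) w) = v" if "v \<in> set w" for v
    using nth_length_takeWhile length_takeWhile_neq_less[OF that] by fastforce
  with x y \<open>x \<noteq> y\<close> have "length (takeWhile (\<lambda>z. z \<noteq> x) w) \<noteq> length (takeWhile (\<lambda>z. z \<noteq> y) w)"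
    by metis
  with eq rank_less[OF x, of y] rank_less[OF y, of x] show False by linarith
qed

lemma takeWhile_neq_first:
  assumes "i < length w" "w ! i \<notin> set (take i w)"
  shows "takeWhile (\<lambda>y. y \<noteq> w ! i) w = take i w"
proof (rule takeWhile_eq_take_P_nth)
  fix j assume "j < i" "j < length w"
  then show "w ! j \<noteq> w ! i" using assms(2) nth_in_take[of j i w] by auto
qed simp

lemma rank_first:
  assumes "i < length w" "w ! i \<notin> set (take i w)"
  shows "rank w (w ! i) = card (set (take i w)) + 1"
  using takeWhile_neq_first[OF assms] by (simp add: rank_def)

lemma first_occurrence:
  assumes "x \<in> set w" shows "\<exists>j < length w. w ! j = x \<and> x \<notin> set (take j w)"
proof -
  define j where "j = length (takeWhile (\<lambda>y. y \<noteq> x) w)"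
  have "j < length w" using length_takeWhile_neq_less[OF assms] by (simp add: j_def)
  moreover have "w ! j = x" using nth_length_takeWhile[of "\<lambda>y. y \<noteq> x" w] calculation by (simp add: j_def)
  moreover have "x \<notin> set (take j w)" unfolding j_def
    by (metis set_takeWhileD takeWhile_eq_take)
  ultimately show ?thesis by blast
qed

lemma minimal_walk_canon:
  assumes cw: "closed_walk w"
  shows "minimal_walk (canon w)"
proof -
  have ne: "w \<noteq> []" using cw by (simp add: closed_walk_def)
  have hd1: "rank w (hd w) = 1" using ne by (cases w) (auto simp: rank_def)
  have cl: "closed_walk (canon w)"
    using cw ne by (auto simp: closed_walk_def canon_def last_map hd_map rank_def)
  have hd: "hd (canon w) = 1" using ne hd1 by (simp add: canon_def hd_map)
  have cond: "canon w ! i \<notin> set (take i (canon w)) \<longrightarrow> canon w ! i = card (set (take i (canon w))) + 1"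
    if i: "i < length (canon w)" for i
  proof
    assume nin: "canon w ! i \<notin> set (take i (canon w))"
    have iw: "i < length w" using i by (simp add: canon_def)
    have st: "set (take i (canon w)) = rank w ` set (take i w)" by (simp add: canon_def take_map)
    have ci: "canon w ! i = rank w (w ! i)" using iw by (simp add: canon_def)
    have "w ! i \<notin> set (take i w)" using nin st ci by auto
    then have "rank w (w ! i) = card (set (take i w)) + 1" using rank_first iw by blast
    moreover have "card (rank w ` set (take i w)) = card (set (take i w))"
      using inj_on_rank by (rule card_image[OF inj_on_subset]) (simp add: set_take_subset)
    ultimately show "canon w ! i = card (set (take i (canon w))) + 1" using st ci by simp
  qed
  show ?thesis unfolding minimal_walk_def using cl hd cond by blast
qed

lemma rank_map:
  assumes inj: "inj_on h (set w)" and x: "x \<in> set w"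
  shows "rank (map h w) (h x) = rank w x"
proof -
  have "takeWhile (\<lambda>y. y \<noteq> h x) (map h w) = map h (takeWhile (\<lambda>y. y \<noteq> x) w)"
  proof -
    have "takeWhile (\<lambda>y. y \<noteq> h x) (map h w) = map h (takeWhile ((\<lambda>y. y \<noteq> h x) \<circ> h) w)"
      by (simp add: takeWhile_map)
    also have "takeWhile ((\<lambda>y. y \<noteq> h x) \<circ> h) w = takeWhile (\<lambda>y. y \<noteq> x) w"
      by (rule takeWhile_cong) (use inj x in \<open>auto simp: inj_on_def\<close>)
    finally show ?thesis .
  qed
  moreover have "card (h ` set (takeWhile (\<lambda>y. y \<noteq> x) w)) = card (set (takeWhile (\<lambda>y. y \<noteq> x) w))"
    by (rule card_image[OF inj_on_subset[OF inj]]) (meson set_takeWhileD subsetI)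
  ultimately show ?thesis by (simp add: rank_def)
qed

lemma canon_map: "inj_on h (set w) \<Longrightarrow> canon (map h w) = canon w"
  by (simp add: canon_def rank_map)

lemma rank_minimal_walk:
  assumes "minimal_walk w" "x \<in> set w" shows "rank w x = x"
proof -
  obtain j where j: "j < length w" "w ! j = x" "x \<notin> set (take j w)" using first_occurrence[OF assms(2)] by blast
  then have "w ! j = card (set (take j w)) + 1" using assms(1) unfolding minimal_walk_def by blast
  then show ?thesis using rank_first[of j w] j by simp
qed

lemma canon_minimal_walk: "minimal_walk w \<Longrightarrow> canon w = w"
  unfolding canon_def by (rule map_idI) (rule rank_minimal_walk)

lemma rank_le_card:
  assumes x: "x \<in> set w" shows "rank w x \<le> card (set w)"
proof -
  have "set (takeWhile (\<lambda>y. y \<noteq> x) w) \<subset> set w"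
    using x by (auto dest: set_takeWhileD)
  then have "card (set (takeWhile (\<lambda>y. y \<noteq> x) w)) < card (set w)" by (simp add: psubset_card_mono)
  then show ?thesis by (simp add: rank_def)
qed

lemma minimal_walk_le_card: "minimal_walk w \<Longrightarrow> x \<in> set w \<Longrightarrow> x \<le> card (set w)"
  using rank_minimal_walk rank_le_card by metis

lemma rank_hd: "w \<noteq> [] \<Longrightarrow> rank w (hd w) = 1"
  by (cases w) (auto simp: rank_def)

lemma rank_eq_1_iff: "w \<noteq> [] \<Longrightarrow> x \<in> set w \<Longrightarrow> rank w x = 1 \<longleftrightarrow> x = hd w"
  using inj_onD[OF inj_on_rank] rank_hd by (metis list.set_sel(1))

lemma root_edges_canon:
  assumes "w \<noteq> []" "hd w = 1"
  shows "{e \<in> wedges (canon w). 1 \<in> e} = (`) (rank w) ` {e \<in> wedges w. 1 \<in> e}"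
proof -
  have "1 \<in> rank w ` e \<longleftrightarrow> 1 \<in> e" if "e \<in> wedges w" for e
    using wedges_subset[OF that] rank_eq_1_iff[OF assms(1)] assms(2) by force
  then show ?thesis unfolding canon_def wedges_map by auto
qed

lemma essential_canon:
  assumes "closed_walk w" "tree_walk w"
  shows "essential (canon w)"
proof -
  have ne: "w \<noteq> []" using assms by (simp add: closed_walk_def)
  have "tree_walk (canon w)" unfolding canon_def using tree_walk_map[OF inj_on_rank ne] assms(2) by simp
  then show ?thesis using minimal_walk_canon[OF assms(1)] by (simp add: essential_def tree_walk_def wverts_def)
qed

section \<open>Excursions from the root\<close>

text \<open>\<open>segments xs\<close> cuts \<open>xs\<close> after every occurrence of \<open>1\<close>; applied to the tail of a
  walk from the root it yields the excursions, each ending with its return to the root.\<close>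

fun segments :: "nat list \<Rightarrow> nat list list" where
  "segments [] = []"
| "segments (x # xs) = (if x = 1 then [1] # segments xs
     else (case segments xs of [] \<Rightarrow> [[x]] | e # es \<Rightarrow> (x # e) # es))"

definition is_segment :: "nat list \<Rightarrow> bool" where
  "is_segment e \<longleftrightarrow> e \<noteq> [] \<and> last e = 1 \<and> 1 \<notin> set (butlast e)"

lemma concat_segments: "concat (segments xs) = xs"
  by (induction xs) (auto split: list.split)

lemma segments_eq_Nil_iff: "segments xs = [] \<longleftrightarrow> xs = []"
proof
  assume "segments xs = []"
  then have "concat (segments xs) = []" by simp
  then show "xs = []" by (simp only: concat_segments)
qed simp

lemma is_segment_segments: "xs = [] \<or> last xs = 1 \<Longrightarrow> e \<in> set (segments xs) \<Longrightarrow> is_segment e"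
proof (induction xs arbitrary: e)
  case Nil then show ?case by simp
next
  case (Cons x xs)
  show ?case
  proof (cases "x = 1")
    case True
    then have "e = [1] \<or> e \<in> set (segments xs)" using Cons.prems(2) by simp
    then show ?thesis
    proof
      assume "e = [1]" then show ?thesis by (simp add: is_segment_def)
    next
      assume e: "e \<in> set (segments xs)"
      then have "xs \<noteq> []" by (auto simp: segments_eq_Nil_iff[symmetric])
      then have "last xs = 1" using Cons.prems(1) by simp
      then show ?thesis using Cons.IH e by blast
    qed
  next
    case False
    then have xs: "xs \<noteq> []" "last xs = 1" using Cons.prems by (auto split: if_splits)
    then obtain e1 es where ex: "segments xs = e1 # es" using segments_eq_Nil_iff by (cases "segments xs") auto
    have c1: "is_segment e1" using Cons.IH[of e1] xs ex by simp
    have "e \<in> set ((x # e1) # es)" using Cons.prems(2) False ex by simp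
    then consider "e = x # e1" | "e \<in> set es" by auto
    then show ?thesis
    proof cases
      case 1
      then show ?thesis using c1 False by (auto simp: is_segment_def)
    next
      case 2
      then show ?thesis using Cons.IH[of e] xs ex by simp
    qed
  qed
qed

lemma segments_append: "is_segment e \<Longrightarrow> segments (e @ ys) = e # segments ys"
proof (induction e)
  case Nil then show ?case by (simp add: is_segment_def)
next
  case (Cons x e)
  show ?case
  proof (cases "e = []")
    case True
    then show ?thesis using Cons.prems by (simp add: is_segment_def)
  next
    case False
    then have x1: "x \<noteq> 1" using Cons.prems by (auto simp: is_segment_def)
    have "is_segment e" using Cons.prems False by (auto simp: is_segment_def)
    then show ?thesis using Cons.IH x1 by simp
  qed
qed

lemma segments_concat: "(\<forall>e\<in>set es. is_segment e) \<Longrightarrow> segments (concat es) = es"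
  by (induction es) (auto simp: segments_append)

lemma segments_map:
  assumes "\<forall>x\<in>set xs. g x = 1 \<longleftrightarrow> x = 1"
  shows "segments (map g xs) = map (map g) (segments xs)"
  using assms
proof (induction xs)
  case (Cons x xs)
  then show ?case by (auto split: list.split)
qed simp

lemma count_list_segment: "is_segment e \<Longrightarrow> count_list e 1 = 1"
proof -
  assume c: "is_segment e"
  then have "e = butlast e @ [1]" by (metis append_butlast_last_id is_segment_def)
  then have "count_list e 1 = count_list (butlast e) 1 + 1" by (metis count_list_append count_list.simps add.commute add_0 add_Suc plus_1_eq_Suc)
  then show ?thesis using c by (simp add: is_segment_def count_list_0_iff)
qed

lemma count_list_concat_segments: "(\<forall>e\<in>set es. is_segment e) \<Longrightarrow> count_list (concat es) 1 = length es"
proof (induction es)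
  case (Cons a es)
  then show ?case using count_list_segment[of a] by (simp del: One_nat_def)
qed simp

lemma length_segments: "xs = [] \<or> last xs = 1 \<Longrightarrow> length (segments xs) = count_list xs 1"
  using count_list_concat_segments[of "segments xs"] is_segment_segments[of xs] concat_segments[of xs] by auto

lemma is_segmentE: "is_segment e \<Longrightarrow> \<exists>b. e = b @ [1] \<and> 1 \<notin> set b"
  unfolding is_segment_def by (metis append_butlast_last_id)

lemma steps_Cons_append: "steps (a # xs @ ys) = steps (a # xs) @ steps (last (a # xs) # ys)"
proof (induction xs arbitrary: a)
  case Nil then show ?case by (cases ys) auto
next
  case (Cons x xs) then show ?case by simp
qed

lemma steps_concat_segments:
  "(\<forall>e\<in>set es. e \<noteq> [] \<and> last e = 1) \<Longrightarrow> steps (1 # concat es) = concat (map (\<lambda>e. steps (1 # e)) es)"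
proof (induction es)
  case Nil then show ?case by simp
next
  case (Cons e es)
  then have "steps (1 # e @ concat es) = steps (1 # e) @ steps (1 # concat es)"
    using steps_Cons_append[of 1 e "concat es"] by simp
  then show ?case using Cons by simp
qed

lemma steps_segment:
  assumes "b \<noteq> []" shows "steps (1 # b @ [1]) = (1, hd b) # steps b @ [(last b, 1)]"
proof -
  have "steps (1 # b @ [1]) = steps (1 # b) @ steps (last (1 # b) # [1])" by (rule steps_Cons_append)
  moreover have "steps (1 # b) = (1, hd b) # steps b" using assms by (cases b) auto
  moreover have "last (1 # b) = last b" using assms by simp
  ultimately show ?thesis by simp
qed

lemma set_concat_1: "set (1 # concat es) = insert 1 (\<Union> (set ` set es))"
  by auto

lemma length_filter_concat_map:
  assumes "\<forall>e\<in>set es. length (filter P (F e)) = (if Q e then 1 else 0)"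
  shows "length (filter P (concat (map F es))) = length (filter Q es)"
  using assms by (induction es) auto

lemma length_filter_concat_map2:
  assumes "\<forall>e\<in>set es. length (filter P (F e)) + (if Q e then 2 else 0) = (if Q e then length e else 0)"
  shows "length (filter P (concat (map F es))) + 2 * length (filter Q es) = length (concat (filter Q es))"
  using assms by (induction es) (auto split: if_splits)

lemma count_list_concat_filter:
  "count_list (concat (map F es)) x =
     count_list (concat (map F (filter P es))) x + count_list (concat (map F (filter (\<lambda>e. \<not> P e) es))) x"
  by (induction es) auto

section \<open>Splitting a walk at the edge \<open>{1, 2}\<close>\<close>

definition excursions :: "nat list \<Rightarrow> nat list list" where
  "excursions w = segments (tl w)"

definition starts_2 :: "nat list \<Rightarrow> bool" where
  "starts_2 e \<longleftrightarrow> hd e = 2"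

text \<open>\<open>branch_walk w\<close> consists of the excursions of \<open>w\<close> entering vertex \<open>2\<close>, which traverse
  the edge \<open>{1, 2}\<close> and the tree \<open>G\<^sub>2\<close>; \<open>rest_walk w\<close> of the remaining ones.\<close>

definition branch_walk :: "nat list \<Rightarrow> nat list" where
  "branch_walk w = 1 # concat (filter starts_2 (excursions w))"

definition rest_walk :: "nat list \<Rightarrow> nat list" where
  "rest_walk w = 1 # concat (filter (\<lambda>e. \<not> starts_2 e) (excursions w))"

definition cut_adj :: "nat list \<Rightarrow> (nat \<times> nat) set" where
  "cut_adj w = adj (wedges w - {{1, 2}})"

lemma G2edges_iff: "G2edges w = {e \<in> wedges w - {{1, 2}}. \<forall>x\<in>e. (2, x) \<in> (cut_adj w)\<^sup>*}"
  by (simp add: G2edges_def cut_adj_def)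

lemma excursions_decomp:
  assumes "w \<noteq> []" "hd w = 1" "last w = 1"
  shows "w = 1 # concat (excursions w)" "\<forall>e\<in>set (excursions w). is_segment e"
proof -
  show "w = 1 # concat (excursions w)" using assms by (cases w) (auto simp: excursions_def concat_segments)
  have "tl w = [] \<or> last (tl w) = 1" using assms by (cases w) (auto split: if_splits)
  then show "\<forall>e\<in>set (excursions w). is_segment e" using is_segment_segments by (auto simp: excursions_def)
qed

lemma even_length_segments:
  assumes "\<forall>i<length (1 # concat es). (1 # concat es) ! i = 1 \<longrightarrow> even i"
    and "\<forall>e\<in>set es. is_segment e"
  shows "\<forall>e\<in>set es. even (length e)"
  using assms
proof (induction es)
  case Nil then show ?case by simp
next
  case (Cons e es)
  have ce: "is_segment e" using Cons.prems by simp
  have le: "(1 # e @ concat es) ! length e = 1"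
    using ce by (cases e rule: rev_cases) (auto simp: is_segment_def nth_append)
  have "length e < length (1 # concat (e # es))" by simp
  then have ev: "even (length e)" using Cons.prems(1) le by auto
  have "\<forall>i<length (1 # concat es). (1 # concat es) ! i = 1 \<longrightarrow> even i"
  proof (intro allI impI)
    fix i assume i: "i < length (1 # concat es)" and v: "(1 # concat es) ! i = 1"
    show "even i"
    proof (cases i)
      case 0 then show ?thesis by simp
    next
      case (Suc j)
      then have "(1 # concat (e # es)) ! (i + length e) = 1"
        using v by (simp add: nth_append)
      moreover have "i + length e < length (1 # concat (e # es))" using i by simp
      ultimately have "even (i + length e)" using Cons.prems(1) by blast
      then show ?thesis using ev by simp
    qed
  qed
  then show ?case using Cons ev by simp
qed

lemma steps_segment_subset:
  assumes "w = 1 # concat es" "\<forall>e\<in>set es. is_segment e" "e \<in> set es"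
  shows "set (steps (1 # e)) \<subseteq> set (steps w)"
proof -
  have "steps w = concat (map (\<lambda>e. steps (1 # e)) es)"
    using assms steps_concat_segments[of es] by (auto simp: is_segment_def)
  then show ?thesis using assms(3) by auto
qed

context
  fixes w :: "nat list"
  assumes ess: "essential w" and len3: "3 \<le> length w"
begin

lemma loop_free_walk: "loop_free w"
  using essentialD[OF ess] tree_walk_iff by blast

lemma walk_excursions: "w = 1 # concat (excursions w)" "\<forall>e\<in>set (excursions w). is_segment e"
  using excursions_decomp essentialD[OF ess] by auto

lemma excursions_not_Nil: "excursions w \<noteq> []"
proof
  assume "excursions w = []"
  then have "w = [1]" using walk_excursions by simp
  then show False using len3 by simp
qed

lemma root_index_even: "i < length w \<Longrightarrow> w ! i = 1 \<Longrightarrow> even i"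
  using tree_walk_same_vertex_parity[OF essentialD(5)[OF ess], of i 0] essentialD(4,1)[OF ess] len3 by auto

lemma even_length_excursion: "e \<in> set (excursions w) \<Longrightarrow> even (length e)"
  using even_length_segments[of "excursions w"] walk_excursions root_index_even by (metis)

lemma steps_excursion_subset: "e \<in> set (excursions w) \<Longrightarrow> set (steps (1 # e)) \<subseteq> set (steps w)"
  using steps_segment_subset walk_excursions by blast

lemma excursionE:
  assumes e: "e \<in> set (excursions w)"
  obtains b where "e = b @ [1]" "1 \<notin> set b" "b \<noteq> []" "hd b \<noteq> 1" "hd e = hd b"
proof -
  obtain b where b: "e = b @ [1]" "1 \<notin> set b" using is_segmentE walk_excursions(2) e by blast
  have "b \<noteq> []"
  proof
    assume "b = []"
    then have "(1, 1) \<in> set (steps w)" using steps_excursion_subset[OF e] b by auto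
    then show False using loop_free_walk by (auto simp: loop_free_def)
  qed
  moreover have "hd b \<noteq> 1" using b calculation by (cases b) auto
  ultimately show ?thesis using that b by simp
qed

lemma length_excursion_ge_2: "e \<in> set (excursions w) \<Longrightarrow> 2 \<le> length e"
  by (erule excursionE) (auto simp: Suc_le_eq)

lemma nth_1_eq_2: "w ! 1 = 2"
proof -
  have nl: "w ! 0 \<noteq> w ! 1" using loop_free_nth[OF loop_free_walk, of 0] len3 by simp
  have "take 1 w = [1]" using essentialD[OF ess] by (cases w) auto
  then have "w ! 1 \<notin> set (take 1 w)" using nl essentialD(4)[OF ess] by simp
  then have "w ! 1 = card (set (take 1 w)) + 1" using essentialD(7)[OF ess] len3 unfolding minimal_walk_def by auto
  then show ?thesis using \<open>take 1 w = [1]\<close> by simp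
qed

lemma hd_hd_excursions: "hd (hd (excursions w)) = 2"
proof -
  obtain e es where ee: "excursions w = e # es" using excursions_not_Nil by (cases "excursions w") auto
  then have "e \<noteq> []" using walk_excursions(2) by (auto simp: is_segment_def)
  then have "w ! 1 = hd e" using walk_excursions(1) ee by (cases e) auto
  then show ?thesis using nth_1_eq_2 ee by simp
qed

lemma edge_12_in_wedges: "{1, 2} \<in> wedges w"
  using step_in_wedges[of 0 w] len3 essentialD(4)[OF ess] nth_1_eq_2 by simp

lemma not_cut_reach_2_1: "(2, 1) \<notin> (cut_adj w)\<^sup>*"
proof
  assume "(2, 1) \<in> (cut_adj w)\<^sup>*"
  then have "(2, 1) \<in> (adj (wedges w - {{2, 1}}))\<^sup>*" by (simp add: cut_adj_def insert_commute)
  moreover have "{2, 1} \<in> wedges w" using edge_12_in_wedges by (simp add: insert_commute)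
  moreover have "simple_graph (set w) (wedges w)" using loop_free_walk simple_graph_walk_iff by blast
  ultimately have "has_cycle (set w) (wedges w)" using has_cycle_if_path_avoiding_edge[of "set w" "wedges w" 2 1] by simp
  then show False using essentialD(5,1)[OF ess] tree_walk_iff by blast
qed

lemma cut_reach_sym: "(x, y) \<in> (cut_adj w)\<^sup>* \<Longrightarrow> (y, x) \<in> (cut_adj w)\<^sup>*"
  unfolding cut_adj_def by (rule adj_rtrancl_sym)

lemma excursion_cut_reach:
  assumes e: "e \<in> set (excursions w)" "e = b @ [1]" "1 \<notin> set b" "b \<noteq> []" and v: "v \<in> set b"
  shows "(hd b, v) \<in> (cut_adj w)\<^sup>*"
proof -
  have pb: "set (steps b) \<subseteq> set (steps w)"
  proof -
    have "steps (1 # b @ [1]) = (1, hd b) # steps b @ [(last b, 1)]" using steps_segment e(4) by blast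
    then show ?thesis using steps_excursion_subset[OF e(1)] e(2) by auto
  qed
  have "wedges b \<subseteq> wedges w - {{1, 2}}"
  proof
    fix x assume "x \<in> wedges b"
    then have "x \<in> wedges w" "x \<subseteq> set b" using pb wedges_subset[of x b] by (auto simp: wedges_steps)
    then show "x \<in> wedges w - {{1, 2}}" using e(3) by auto
  qed
  moreover obtain k where k: "k < length b" "b ! k = v" using v by (auto simp: in_set_conv_nth)
  moreover have "(b ! 0, b ! k) \<in> (adj (wedges b))\<^sup>*" using walk_reach[of 0 k b] k by simp
  ultimately have "(b ! 0, v) \<in> (cut_adj w)\<^sup>*" unfolding cut_adj_def using adj_rtrancl_mono by metis
  then show ?thesis using e(4) by (simp add: hd_conv_nth)
qed

lemma branch_excursion_reach:
  assumes e: "e \<in> set (excursions w)" "starts_2 e" and v: "v \<in> set e" "v \<noteq> 1"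
  shows "(2, v) \<in> (cut_adj w)\<^sup>*"
proof -
  obtain b where b: "e = b @ [1]" "1 \<notin> set b" "b \<noteq> []" "hd e = hd b" using excursionE[OF e(1)] by metis
  have "v \<in> set b" using v b by auto
  then show ?thesis using excursion_cut_reach[OF e(1) b(1-3)] e(2) b(4) by (simp add: starts_2_def)
qed

lemma rest_excursion_reach:
  assumes e: "e \<in> set (excursions w)" "\<not> starts_2 e" and v: "v \<in> set e"
  shows "(v, 1) \<in> (cut_adj w)\<^sup>*"
proof (cases "v = 1")
  case True then show ?thesis by simp
next
  case False
  obtain b where b: "e = b @ [1]" "1 \<notin> set b" "b \<noteq> []" "hd b \<noteq> 1" "hd e = hd b"
    using excursionE[OF e(1)] by metis
  have vb: "v \<in> set b" using v b False by auto
  have "(hd b, v) \<in> (cut_adj w)\<^sup>*" using excursion_cut_reach[OF e(1) b(1-3) vb] .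
  then have 1: "(v, hd b) \<in> (cut_adj w)\<^sup>*" by (rule cut_reach_sym)
  have "(1, hd b) \<in> set (steps w)" using steps_excursion_subset[OF e(1)] b steps_segment[of b] by auto
  then have "{1, hd b} \<in> wedges w" by (force simp: wedges_steps edge_of_def)
  moreover have "hd b \<noteq> 2" using e(2) b by (simp add: starts_2_def)
  ultimately have "(hd b, 1) \<in> cut_adj w" using b(4) by (auto simp: cut_adj_def adj_def insert_commute doubleton_eq_iff)
  then show ?thesis using 1 by (meson rtrancl_into_rtrancl)
qed

lemma branch_excursion_last:
  assumes e: "e \<in> set (excursions w)" "starts_2 e" and b: "e = b @ [1]" "b \<noteq> []" "1 \<notin> set b"
  shows "last b = 2"
proof (rule ccontr)
  assume l2: "last b \<noteq> 2"
  have lb1: "last b \<in> set b" using b(2) by simp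
  have lb: "last b \<in> set b" "last b \<noteq> 1" using lb1 b(3) by metis+
  have "(2, last b) \<in> (cut_adj w)\<^sup>*" using branch_excursion_reach[OF e, of "last b"] lb b by auto
  moreover have "(last b, 1) \<in> set (steps w)" using steps_excursion_subset[OF e(1)] b steps_segment[of b] by auto
  then have "{last b, 1} \<in> wedges w" by (force simp: wedges_steps edge_of_def)
  then have "(last b, 1) \<in> cut_adj w" using l2 lb by (auto simp: cut_adj_def adj_def doubleton_eq_iff)
  ultimately have "(2, 1) \<in> (cut_adj w)\<^sup>*" by (meson rtrancl_into_rtrancl)
  then show False using not_cut_reach_2_1 by simp
qed

lemma branch_excursionE:
  assumes e: "e \<in> set (excursions w)" "starts_2 e"
  obtains b where "e = b @ [1]" "1 \<notin> set b" "b \<noteq> []" "steps (1 # e) = (1, 2) # steps b @ [(2, 1)]"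
proof -
  obtain b where b: "e = b @ [1]" "1 \<notin> set b" "b \<noteq> []" "hd e = hd b"
    using excursionE[OF e(1)] by metis
  moreover have "steps (1 # e) = (1, 2) # steps b @ [(2, 1)]"
    using steps_segment[OF b(3)] b e(2) branch_excursion_last[OF e b(1,3,2)] by (simp add: starts_2_def)
  ultimately show ?thesis using that by blast
qed

lemma set_branch_rest_Int: "set (branch_walk w) \<inter> set (rest_walk w) = {1}"
proof -
  have "x = 1" if xa: "x \<in> set (branch_walk w)" and xb: "x \<in> set (rest_walk w)" for x
  proof (rule ccontr)
    assume x1: "x \<noteq> 1"
    obtain e1 where e1: "e1 \<in> set (excursions w)" "starts_2 e1" "x \<in> set e1" using xa x1 by (auto simp: branch_walk_def)
    obtain e2 where e2: "e2 \<in> set (excursions w)" "\<not> starts_2 e2" "x \<in> set e2" using xb x1 by (auto simp: rest_walk_def)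
    have "(2, x) \<in> (cut_adj w)\<^sup>*" using branch_excursion_reach[OF e1(1,2) e1(3) x1] .
    moreover have "(x, 1) \<in> (cut_adj w)\<^sup>*" using rest_excursion_reach[OF e2] .
    ultimately show False using not_cut_reach_2_1 by (meson rtrancl_trans)
  qed
  then show ?thesis by (auto simp: branch_walk_def rest_walk_def)
qed

lemma set_branch_rest_Un: "set w = set (branch_walk w) \<union> set (rest_walk w)"
proof -
  have "set w = insert 1 (\<Union> (set ` set (excursions w)))" using walk_excursions(1) by (metis set_concat_1)
  then show ?thesis by (auto simp: branch_walk_def rest_walk_def)
qed

lemma steps_branch_rest:
  "steps (branch_walk w) = concat (map (\<lambda>e. steps (1 # e)) (filter starts_2 (excursions w)))"
  "steps (rest_walk w) = concat (map (\<lambda>e. steps (1 # e)) (filter (\<lambda>e. \<not> starts_2 e) (excursions w)))"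
  "steps w = concat (map (\<lambda>e. steps (1 # e)) (excursions w))"
proof -
  have c: "\<forall>e\<in>set (excursions w). e \<noteq> [] \<and> last e = 1" using walk_excursions(2) by (auto simp: is_segment_def)
  show "steps (branch_walk w) = concat (map (\<lambda>e. steps (1 # e)) (filter starts_2 (excursions w)))"
    unfolding branch_walk_def by (rule steps_concat_segments) (use c in auto)
  show "steps (rest_walk w) = concat (map (\<lambda>e. steps (1 # e)) (filter (\<lambda>e. \<not> starts_2 e) (excursions w)))"
    unfolding rest_walk_def by (rule steps_concat_segments) (use c in auto)
  show "steps w = concat (map (\<lambda>e. steps (1 # e)) (excursions w))"
    by (subst walk_excursions(1)) (rule steps_concat_segments, use c in auto)
qed

lemma tree_walk_branch_rest: "tree_walk (branch_walk w)" "tree_walk (rest_walk w)"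
proof -
  have "set (steps (branch_walk w)) \<subseteq> set (steps w)" using steps_branch_rest by auto
  moreover have "set (branch_walk w) \<subseteq> set w" using set_branch_rest_Un by auto
  ultimately show "tree_walk (branch_walk w)" using tree_walk_subwalk[OF essentialD(5,1)[OF ess]] by (simp add: branch_walk_def)
  have "set (steps (rest_walk w)) \<subseteq> set (steps w)" using steps_branch_rest by auto
  moreover have "set (rest_walk w) \<subseteq> set w" using set_branch_rest_Un by auto
  ultimately show "tree_walk (rest_walk w)" using tree_walk_subwalk[OF essentialD(5,1)[OF ess]] by (simp add: rest_walk_def)
qed

lemma excursions_branch_rest: "excursions (branch_walk w) = filter starts_2 (excursions w)" "excursions (rest_walk w) = filter (\<lambda>e. \<not> starts_2 e) (excursions w)"
  using segments_concat walk_excursions(2) by (auto simp: excursions_def branch_walk_def rest_walk_def)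

end

lemma card_root_indices:
  assumes "w \<noteq> []" "hd w = 1" "last w = 1"
  shows "card {i. i < length w - 1 \<and> w ! i = 1} = length (excursions w)"
proof -
  have "card {i. i < length w - 1 \<and> w ! i = 1} = card {i. i < length (butlast w) \<and> butlast w ! i = 1}"
    by (rule arg_cong[where f = card]) (auto simp: nth_butlast)
  also have "\<dots> = length (filter (\<lambda>y. y = 1) (butlast w))"
    by (rule length_filter_conv_card[symmetric])
  also have "\<dots> = length (filter ((=) 1) (butlast w))"
    by (intro arg_cong[where f = length] filter_cong) auto
  also have "\<dots> = count_list (butlast w) 1"
    by (simp add: count_list_eq_length_filter)
  also have "\<dots> = count_list (tl w) 1"
  proof -
    have "butlast w @ [1] = w" using append_butlast_last_id[OF assms(1)] assms(3) by simp
    then have "count_list w 1 = count_list (butlast w) 1 + 1"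
      using count_list_append[of "butlast w" "[1]" 1] by simp
    moreover have "count_list w 1 = count_list (tl w) 1 + 1" using assms(1,2) by (cases w) auto
    ultimately show ?thesis by simp
  qed
  also have "\<dots> = length (excursions w)"
  proof -
    have "tl w = [] \<or> last (tl w) = 1" using assms by (cases w) (auto split: if_splits)
    then show ?thesis using length_segments by (simp add: excursions_def)
  qed
  finally show ?thesis .
qed

lemma prod_count_list_Un:
  assumes "set xs \<inter> set ys = {}"
  shows "(\<Prod>e\<in>set xs \<union> set ys. f (count_list xs e + count_list ys e)) =
    (\<Prod>e\<in>set xs. f (count_list xs e)) * (\<Prod>e\<in>set ys. f (count_list ys e))"
proof -
  have "(\<Prod>e\<in>set xs \<union> set ys. f (count_list xs e + count_list ys e)) =
      (\<Prod>e\<in>set xs. f (count_list xs e + count_list ys e)) * (\<Prod>e\<in>set ys. f (count_list xs e + count_list ys e))"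
    using assms by (simp add: prod.union_disjoint)
  also have "\<dots> = (\<Prod>e\<in>set xs. f (count_list xs e)) * (\<Prod>e\<in>set ys. f (count_list ys e))"
  proof -
    have "count_list ys e = 0" if "e \<in> set xs" for e using assms that by (auto simp: count_list_0_iff)
    moreover have "count_list xs e = 0" if "e \<in> set ys" for e using assms that by (auto simp: count_list_0_iff)
    ultimately show ?thesis by (intro arg_cong2[where f = "(*)"] prod.cong refl) simp_all
  qed
  finally show ?thesis .
qed

text \<open>\<open>theta1\<close> and \<open>theta2\<close> with the parity of the distance to the root replaced by the parity
  of the position in the walk (\<open>beta_eq_card_even_pos\<close>); this form is invariant under relabelling.\<close>

definition weight :: "real \<Rightarrow> real \<Rightarrow> real \<Rightarrow> (nat \<Rightarrow> real) \<Rightarrow> nat list \<Rightarrow> real" where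
  "weight a b p X w = a ^ card (even_pos w) * b ^ (card (set w) - card (even_pos w)) *
     (\<Prod>e\<in>set (step_edges w). p * X (count_list (step_edges w) e))"

lemma theta_eq_weight:
  assumes "tree_walk w" "w \<noteq> []" "w ! 0 = 1"
  shows "theta1 \<alpha> p X w = weight \<alpha> (1 - \<alpha>) p X w" "theta2 \<alpha> p X w = weight (1 - \<alpha>) \<alpha> p X w"
  unfolding theta1_def theta2_def weight_def beta_eq_card_even_pos[OF assms(1,3,2)] wverts_def set_step_edges nmult_eq_count_step_edges by simp_all

lemma weight_map:
  assumes inj: "inj_on g (set w)"
  shows "weight a b p X (map g w) = weight a b p X w"
proof -
  have ev: "card (even_pos (map g w)) = card (even_pos w)"
    using card_image[OF inj_on_subset[OF inj even_pos_subset[of w]]] by (simp add: even_pos_map)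
  have st: "card (set (map g w)) = card (set w)" using inj by (simp add: card_image)
  have "set (step_edges w) \<subseteq> Pow (set w)" using wedges_subset by (auto simp: set_step_edges)
  then have inj2: "inj_on ((`) g) (set (step_edges w))"
    using inj_on_image_Pow[OF inj] by (rule inj_on_subset[rotated])
  have "(\<Prod>e\<in>set (step_edges (map g w)). p * X (count_list (step_edges (map g w)) e)) =
        (\<Prod>e\<in>(`) g ` set (step_edges w). p * X (count_list (map ((`) g) (step_edges w)) e))"
    by (simp add: step_edges_map)
  also have "\<dots> = (\<Prod>e\<in>set (step_edges w). p * X (count_list (map ((`) g) (step_edges w)) (g ` e)))"
    using inj2 by (simp add: prod.reindex)
  also have "\<dots> = (\<Prod>e\<in>set (step_edges w). p * X (count_list (step_edges w) e))"
    using inj2 by (intro prod.cong refl) (simp add: count_list_inj_map)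
  finally show ?thesis using ev st by (simp add: weight_def)
qed

lemma length_concat_filter_compl:
  "length (concat (filter P es)) + length (concat (filter (\<lambda>e. \<not> P e) es)) = length (concat es)"
  by (induction es) auto

lemma even_pos_root_concat:
  "(\<forall>e\<in>set es. even (length e)) \<Longrightarrow> even_pos (1 # concat es) = insert 1 (\<Union> (odd_pos ` set es))"
  by (simp add: even_pos_Cons odd_pos_concat)

context
  fixes w :: "nat list"
  assumes ess: "essential w" and len3: "3 \<le> length w"
begin

lemma card_steps_12:
  "card {i. i < length w - 1 \<and> w ! i = 1 \<and> w ! (i+1) = 2} = length (filter starts_2 (excursions w))"
proof -
  have "card {i. i < length w - 1 \<and> w ! i = 1 \<and> w ! (i+1) = 2} =
        card {i. i < length (steps w) \<and> steps w ! i = (1, 2)}"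
    by (rule arg_cong[where f = card]) (auto simp: nth_steps)
  also have "\<dots> = length (filter (\<lambda>p. p = (1, 2)) (steps w))" by (rule length_filter_conv_card[symmetric])
  also have "\<dots> = length (filter starts_2 (excursions w))"
    unfolding steps_branch_rest(3)[OF ess len3]
  proof (rule length_filter_concat_map, intro ballI)
    fix e assume e: "e \<in> set (excursions w)"
    obtain b where b: "e = b @ [1]" "1 \<notin> set b" "b \<noteq> []" "hd b \<noteq> 1" "hd e = hd b"
      using excursionE[OF ess len3 e] by metis
    have pe: "steps (1 # e) = (1, hd b) # steps b @ [(last b, 1)]" using steps_segment[OF b(3)] b(1) by simp
    have np: "\<forall>p\<in>set (steps b). p \<noteq> (1, 2)" using steps_memD b(2) by fastforce
    have "last b \<noteq> 1" using b(2,3) last_in_set by metis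
    then have "filter (\<lambda>p. p = (1, 2)) (steps (1 # e)) = (if hd b = 2 then [(1, 2)] else [])"
      using np pe by (auto simp: filter_empty_conv)
    then show "length (filter (\<lambda>p. p = (1, 2)) (steps (1 # e))) = (if starts_2 e then 1 else 0)"
      using b(5) by (simp add: starts_2_def)
  qed
  finally show ?thesis .
qed

lemma G2_steps_branch_excursion:
  assumes e: "e \<in> set (excursions w)" "starts_2 e"
  shows "length (filter (\<lambda>p. edge_of p \<in> G2edges w) (steps (1 # e))) + 2 = length e"
proof -
  obtain b where b: "e = b @ [1]" "1 \<notin> set b" "b \<noteq> []" and pe: "steps (1 # e) = (1, 2) # steps b @ [(2, 1)]"
    using branch_excursionE[OF ess len3 e] by metis
  have "edge_of p \<in> G2edges w" if p: "p \<in> set (steps b)" for p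
  proof -
    have "p \<in> set (steps w)" using p pe steps_excursion_subset[OF ess len3 e(1)] by auto
    moreover have "edge_of p \<subseteq> set b" using steps_memD[OF p] by (auto simp: edge_of_def)
    moreover have "(2, x) \<in> (cut_adj w)\<^sup>*" if "x \<in> set b" for x
      using branch_excursion_reach[OF ess len3 e, of x] that b by auto
    ultimately show ?thesis using b(2) by (auto simp: G2edges_iff wedges_steps)
  qed
  moreover have "{1, 2} \<notin> G2edges w" by (simp add: G2edges_iff)
  ultimately have "filter (\<lambda>p. edge_of p \<in> G2edges w) (steps (1 # e)) = steps b"
    unfolding pe by (auto simp: edge_of_def insert_commute)
  with b(1,3) show ?thesis by (cases b) auto
qed

lemma G2_steps_rest_excursion:
  assumes e: "e \<in> set (excursions w)" "\<not> starts_2 e" and p: "p \<in> set (steps (1 # e))"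
  shows "edge_of p \<notin> G2edges w"
proof
  assume "edge_of p \<in> G2edges w"
  then have "(2, fst p) \<in> (cut_adj w)\<^sup>*" by (auto simp: G2edges_iff edge_of_def)
  moreover have "(fst p, 1) \<in> (cut_adj w)\<^sup>*"
    using steps_memD[OF p] rest_excursion_reach[OF ess len3 e, of "fst p"] by auto
  ultimately show False using not_cut_reach_2_1[OF ess len3] by (meson rtrancl_trans)
qed

lemma card_steps_G2:
  "card {i. i < length w - 1 \<and> {w ! i, w ! (i+1)} \<in> G2edges w} + 2 * length (filter starts_2 (excursions w))
     = length (branch_walk w) - 1"
proof -
  have "card {i. i < length w - 1 \<and> {w ! i, w ! (i+1)} \<in> G2edges w} =
        card {i. i < length (steps w) \<and> edge_of (steps w ! i) \<in> G2edges w}"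
    by (rule arg_cong[where f = card]) (auto simp: nth_steps edge_of_def)
  also have "\<dots> = length (filter (\<lambda>p. edge_of p \<in> G2edges w) (steps w))"
    by (rule length_filter_conv_card[symmetric])
  finally have c: "card {i. i < length w - 1 \<and> {w ! i, w ! (i+1)} \<in> G2edges w} =
      length (filter (\<lambda>p. edge_of p \<in> G2edges w) (steps w))" .
  have "length (filter (\<lambda>p. edge_of p \<in> G2edges w) (concat (map (\<lambda>e. steps (1 # e)) (excursions w))))
        + 2 * length (filter starts_2 (excursions w)) = length (concat (filter starts_2 (excursions w)))"
  proof (rule length_filter_concat_map2, intro ballI)
    fix e assume e: "e \<in> set (excursions w)"
    show "length (filter (\<lambda>p. edge_of p \<in> G2edges w) (steps (1 # e))) + (if starts_2 e then 2 else 0) =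
          (if starts_2 e then length e else 0)"
      using G2_steps_branch_excursion[OF e] G2_steps_rest_excursion[OF e]
      by (auto simp: filter_empty_conv)
  qed
  then show ?thesis using c steps_branch_rest(3)[OF ess len3] by (simp add: branch_walk_def)
qed

lemma length_branch_rest: "length w + 1 = length (branch_walk w) + length (rest_walk w)"
proof -
  have "length w = 1 + length (concat (excursions w))" using walk_excursions(1)[OF ess len3] by (metis length_Cons plus_1_eq_Suc)
  then show ?thesis using length_concat_filter_compl[of starts_2 "excursions w"] by (simp add: branch_walk_def rest_walk_def)
qed

lemma root_edges_branch: "{e \<in> wedges (branch_walk w). 1 \<in> e} = {{1, 2}}"
proof -
  have "edge_of p = {1, 2}" if p: "p \<in> set (steps (branch_walk w))" "1 \<in> edge_of p" for p
  proof -
    obtain e where e: "e \<in> set (excursions w)" "starts_2 e" "p \<in> set (steps (1 # e))"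
      using p(1) steps_branch_rest(1)[OF ess len3] by auto
    obtain b where b: "1 \<notin> set b" "steps (1 # e) = (1, 2) # steps b @ [(2, 1)]"
      using branch_excursionE[OF ess len3 e(1,2)] by metis
    have "p \<notin> set (steps b)" using steps_memD p(2) b(1) by (fastforce simp: edge_of_def)
    with e(3) b(2) show ?thesis by (auto simp: edge_of_def)
  qed
  moreover have "(1, 2) \<in> set (steps (branch_walk w))"
  proof -
    let ?e = "hd (excursions w)"
    have e: "?e \<in> set (excursions w)" "starts_2 ?e"
      using excursions_not_Nil[OF ess len3] hd_hd_excursions[OF ess len3] by (auto simp: starts_2_def)
    then obtain b where "steps (1 # ?e) = (1, 2) # steps b @ [(2, 1)]"
      using branch_excursionE[OF ess len3] by metis
    with e show ?thesis using steps_branch_rest(1)[OF ess len3] by force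
  qed
  moreover have "edge_of (1, 2) = {1, 2::nat}" by (simp add: edge_of_def)
  ultimately show ?thesis unfolding wedges_steps by blast
qed

lemma even_pos_branch_rest: "even_pos w = even_pos (branch_walk w) \<union> even_pos (rest_walk w)"
proof -
  have ev: "\<forall>e\<in>set (excursions w). even (length e)" using even_length_excursion[OF ess len3] by blast
  have "even_pos w = insert 1 (\<Union> (odd_pos ` set (excursions w)))"
    using even_pos_root_concat[OF ev] walk_excursions(1)[OF ess len3] by metis
  moreover have "even_pos (branch_walk w) = insert 1 (\<Union> (odd_pos ` set (filter starts_2 (excursions w))))"
    unfolding branch_walk_def by (rule even_pos_root_concat) (use ev in auto)
  moreover have "even_pos (rest_walk w) = insert 1 (\<Union> (odd_pos ` set (filter (\<lambda>e. \<not> starts_2 e) (excursions w))))"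
    unfolding rest_walk_def by (rule even_pos_root_concat) (use ev in auto)
  ultimately show ?thesis by auto
qed

lemma step_edges_branch_rest:
  "count_list (step_edges w) x = count_list (step_edges (branch_walk w)) x + count_list (step_edges (rest_walk w)) x"
  "set (step_edges w) = set (step_edges (branch_walk w)) \<union> set (step_edges (rest_walk w))"
  "set (step_edges (branch_walk w)) \<inter> set (step_edges (rest_walk w)) = {}"
proof -
  have s: "step_edges v = map edge_of (steps v)" for v :: "nat list" by (simp add: step_edges_def)
  show "count_list (step_edges w) x = count_list (step_edges (branch_walk w)) x + count_list (step_edges (rest_walk w)) x"
    unfolding s steps_branch_rest[OF ess len3] map_concat
    using count_list_concat_filter[of "\<lambda>e. map edge_of (steps (1 # e))" "excursions w" x starts_2]
    by (simp add: comp_def)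
  show "set (step_edges w) = set (step_edges (branch_walk w)) \<union> set (step_edges (rest_walk w))"
    unfolding s steps_branch_rest[OF ess len3] by auto
  show "set (step_edges (branch_walk w)) \<inter> set (step_edges (rest_walk w)) = {}"
  proof (rule ccontr)
    assume "set (step_edges (branch_walk w)) \<inter> set (step_edges (rest_walk w)) \<noteq> {}"
    then obtain x where xa: "x \<in> wedges (branch_walk w)" and xb: "x \<in> wedges (rest_walk w)" by (auto simp: set_step_edges)
    have "x \<subseteq> {1}" using wedges_subset[OF xa] wedges_subset[OF xb] set_branch_rest_Int[OF ess len3] by auto
    moreover obtain p where p: "p \<in> set (steps (branch_walk w))" "x = edge_of p" using xa by (auto simp: wedges_steps)
    moreover have "loop_free (branch_walk w)" using tree_walk_branch_rest(1)[OF ess len3] tree_walk_iff by (auto simp: branch_walk_def)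
    ultimately show False by (auto simp: loop_free_def edge_of_def)
  qed
qed

lemma weight_branch_rest:
  "weight a b p X w * a = weight a b p X (branch_walk w) * weight a b p X (rest_walk w)"
proof -
  let ?A = "branch_walk w" and ?B = "rest_walk w"
  have root: "1 \<in> even_pos ?A" "1 \<in> even_pos ?B"
    by (simp_all add: branch_walk_def rest_walk_def even_pos_Cons)
  have "even_pos ?A \<inter> even_pos ?B = {1}"
    using root set_branch_rest_Int[OF ess len3] even_pos_subset[of ?A] even_pos_subset[of ?B] by blast
  then have cE: "card (even_pos w) + 1 = card (even_pos ?A) + card (even_pos ?B)"
    using card_Un_Int[of "even_pos ?A" "even_pos ?B"] even_pos_branch_rest
    by (simp add: finite_subset[OF even_pos_subset])
  have cV: "card (set w) + 1 = card (set ?A) + card (set ?B)"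
    using card_Un_Int[of "set ?A" "set ?B"] set_branch_rest_Int[OF ess len3] set_branch_rest_Un[OF ess len3]
    by simp
  have le: "card (even_pos v) \<le> card (set v)" for v :: "nat list"
    by (simp add: card_mono even_pos_subset)
  define P where "P v = (\<Prod>e\<in>set (step_edges v). p * X (count_list (step_edges v) e))" for v :: "nat list"
  have "a ^ card (even_pos w) * a = a ^ (card (even_pos w) + 1)" by simp
  also have "\<dots> = a ^ card (even_pos ?A) * a ^ card (even_pos ?B)" by (simp only: cE power_add)
  finally have pa: "a ^ card (even_pos w) * a = a ^ card (even_pos ?A) * a ^ card (even_pos ?B)" .
  have "card (set w) - card (even_pos w) =
      (card (set ?A) - card (even_pos ?A)) + (card (set ?B) - card (even_pos ?B))"
    using cE cV le[of ?A] le[of ?B] by linarith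
  then have pb: "b ^ (card (set w) - card (even_pos w)) =
      b ^ (card (set ?A) - card (even_pos ?A)) * b ^ (card (set ?B) - card (even_pos ?B))"
    by (simp only: power_add)
  have "P w = (\<Prod>e\<in>set (step_edges ?A) \<union> set (step_edges ?B).
      p * X (count_list (step_edges ?A) e + count_list (step_edges ?B) e))"
    by (simp only: P_def step_edges_branch_rest(1,2))
  then have pe: "P w = P ?A * P ?B"
    unfolding P_def using prod_count_list_Un[OF step_edges_branch_rest(3)] by simp
  have "weight a b p X w * a = (a ^ card (even_pos w) * a) * b ^ (card (set w) - card (even_pos w)) * P w"
    by (simp add: weight_def P_def mult_ac)
  also have "\<dots> = weight a b p X ?A * weight a b p X ?B"
    unfolding pa pb pe by (simp add: weight_def P_def mult_ac)
  finally show ?thesis .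
qed

end

lemma last_root_concat: "(\<forall>e\<in>set es. is_segment e) \<Longrightarrow> last (1 # concat es) = 1"
  by (induction es) (auto simp: is_segment_def last_append split: if_splits)

lemma closed_walk_root_concat:
  assumes "\<forall>e\<in>set es. is_segment e" "\<forall>x\<in>set (concat es). 0 < x"
  shows "closed_walk (1 # concat es)"
  using assms last_root_concat[OF assms(1)] by (auto simp: closed_walk_def)

lemma excursions_canon:
  assumes "w \<noteq> []" "hd w = 1"
  shows "excursions (canon w) = map (map (rank w)) (excursions w)"
proof -
  have "\<forall>x\<in>set (tl w). rank w x = 1 \<longleftrightarrow> x = 1"
    using rank_eq_1_iff[OF assms(1)] assms by (simp add: list.set_sel(2))
  then show ?thesis unfolding excursions_def canon_def using segments_map by (simp add: map_tl[symmetric])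
qed

lemma card_root_indices_essential:
  "essential w \<Longrightarrow> length w = 2 * n + 1 \<Longrightarrow> card {i. i < 2 * n \<and> w ! i = 1} = length (excursions w)"
  using card_root_indices[of w] essentialD[of w] by simp

lemma canon_basics:
  assumes "w \<noteq> []" "hd w = 1"
  shows "canon w ! 0 = 1" "canon w \<noteq> []" "length (canon w) = length w"
proof -
  have "canon w ! 0 = rank w (w ! 0)" using assms by (simp add: canon_def)
  also have "w ! 0 = hd w" using assms(1) by (simp add: hd_conv_nth)
  finally show "canon w ! 0 = 1" using rank_hd[OF assms(1)] assms(2) by simp
  show "canon w \<noteq> []" "length (canon w) = length w" using assms by (auto simp: canon_def)
qed

text \<open>The third component records the slots \<open>k \<ge> 1\<close> of the excursions that belong to the
  branch walk; slot \<open>0\<close> always does, since the walk starts with the step \<open>1 \<rightarrow> 2\<close>.\<close>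

definition split_walk :: "nat list \<Rightarrow> nat list \<times> nat list \<times> nat set" where
  "split_walk w = (canon (branch_walk w), canon (rest_walk w),
     {k. 1 \<le> k \<and> k < length (excursions w) \<and> starts_2 (excursions w ! k)})"

definition split_range :: "nat \<Rightarrow> nat \<Rightarrow> nat \<Rightarrow> nat \<Rightarrow> (nat list \<times> nat list \<times> nat set) set" where
  "split_range l r u f = Lam2 (f + u) f \<times> Lam (l - u - f) (r - f) \<times> {S. S \<subseteq> {1..<r} \<and> card S = f - 1}"

context
  fixes w :: "nat list"
  assumes ess: "essential w" and len3: "3 \<le> length w"
begin

lemma closed_walk_branch_rest: "closed_walk (branch_walk w)" "closed_walk (rest_walk w)"
proof -
  have pos: "\<forall>x\<in>set w. 0 < x" using essentialD(6)[OF ess] by (simp add: closed_walk_def)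
  have ch: "\<forall>e\<in>set (excursions w). is_segment e" using walk_excursions[OF ess len3] by simp
  have sA: "set (branch_walk w) \<subseteq> set w" and sB: "set (rest_walk w) \<subseteq> set w" using set_branch_rest_Un[OF ess len3] by auto
  show "closed_walk (branch_walk w)" unfolding branch_walk_def
    by (rule closed_walk_root_concat) (use ch in simp, use sA pos in \<open>auto simp: branch_walk_def\<close>)
  show "closed_walk (rest_walk w)" unfolding rest_walk_def
    by (rule closed_walk_root_concat) (use ch in simp, use sB pos in \<open>auto simp: rest_walk_def\<close>)
qed

lemma essential_canon_branch_rest: "essential (canon (branch_walk w))" "essential (canon (rest_walk w))"
  using essential_canon closed_walk_branch_rest tree_walk_branch_rest[OF ess len3] by auto

lemma theta_branch_rest:
  shows "theta1 \<alpha> p X w * \<alpha> = theta1 \<alpha> p X (canon (branch_walk w)) * theta1 \<alpha> p X (canon (rest_walk w))"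
        "theta2 \<alpha> p X w * (1 - \<alpha>) = theta2 \<alpha> p X (canon (branch_walk w)) * theta2 \<alpha> p X (canon (rest_walk w))"
proof -
  have nA: "branch_walk w \<noteq> []" "hd (branch_walk w) = 1" and nB: "rest_walk w \<noteq> []" "hd (rest_walk w) = 1" by (auto simp: branch_walk_def rest_walk_def)
  have tA: "tree_walk (canon (branch_walk w))" and tB: "tree_walk (canon (rest_walk w))"
    using essential_canon_branch_rest by (auto simp: essential_def tree_walk_def wverts_def)
  have cA: "weight a b p X (canon (branch_walk w)) = weight a b p X (branch_walk w)" for a b
    unfolding canon_def by (rule weight_map[OF inj_on_rank])
  have cB: "weight a b p X (canon (rest_walk w)) = weight a b p X (rest_walk w)" for a b
    unfolding canon_def by (rule weight_map[OF inj_on_rank])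
  have bw: "tree_walk w" "w \<noteq> []" "w ! 0 = 1" using essentialD[OF ess] by auto
  show "theta1 \<alpha> p X w * \<alpha> = theta1 \<alpha> p X (canon (branch_walk w)) * theta1 \<alpha> p X (canon (rest_walk w))"
    using theta_eq_weight(1)[OF bw] theta_eq_weight(1)[OF tA canon_basics(2,1)[OF nA]]
      theta_eq_weight(1)[OF tB canon_basics(2,1)[OF nB]] weight_branch_rest[OF ess len3] cA cB by simp
  show "theta2 \<alpha> p X w * (1 - \<alpha>) = theta2 \<alpha> p X (canon (branch_walk w)) * theta2 \<alpha> p X (canon (rest_walk w))"
    using theta_eq_weight(2)[OF bw] theta_eq_weight(2)[OF tA canon_basics(2,1)[OF nA]]
      theta_eq_weight(2)[OF tB canon_basics(2,1)[OF nB]] weight_branch_rest[OF ess len3] cA cB by simp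
qed

lemma excursions_canon_branch_rest:
  "excursions (canon (branch_walk w)) = map (map (rank (branch_walk w))) (filter starts_2 (excursions w))"
  "excursions (canon (rest_walk w)) = map (map (rank (rest_walk w))) (filter (\<lambda>e. \<not> starts_2 e) (excursions w))"
  using excursions_canon[of "branch_walk w"] excursions_canon[of "rest_walk w"] excursions_branch_rest[OF ess len3] by (auto simp: branch_walk_def rest_walk_def)

lemma card_branch_slots: "card {k. 1 \<le> k \<and> k < length (excursions w) \<and> starts_2 (excursions w ! k)} = length (filter starts_2 (excursions w)) - 1"
proof -
  have "{k. 1 \<le> k \<and> k < length (excursions w) \<and> starts_2 (excursions w ! k)} = {k. k < length (excursions w) \<and> starts_2 (excursions w ! k)} - {0}"
    by auto
  moreover have "0 \<in> {k. k < length (excursions w) \<and> starts_2 (excursions w ! k)}"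
    using excursions_not_Nil[OF ess len3] hd_hd_excursions[OF ess len3] by (auto simp: starts_2_def hd_conv_nth)
  moreover have "card {k. k < length (excursions w) \<and> starts_2 (excursions w ! k)} = length (filter starts_2 (excursions w))"
    by (rule length_filter_conv_card[symmetric])
  ultimately show ?thesis by (simp add: card_Diff_singleton)
qed

end

lemma Lam1D:
  assumes "w \<in> Lam1 l r u f"
  shows "essential w" "length w = 2 * l + 1" "0 < l" "3 \<le> length w"
    "length (excursions w) = r" "length (filter starts_2 (excursions w)) = f"
    "length (branch_walk w) = 2 * (f + u) + 1"
proof -
  have w: "essential w" "length w = 2 * l + 1" "card {i. i < 2 * l \<and> w ! i = 1} = r" "0 < l"
    "2 * u = card {i. i < 2 * l \<and> {w ! i, w ! (i + 1)} \<in> G2edges w}"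
    "f = card {i. i < 2 * l \<and> w ! i = 1 \<and> w ! (i + 1) = 2}"
    using assms by (auto simp: Lam1_def Lam_def)
  show "essential w" "length w = 2 * l + 1" "0 < l" using w by auto
  show l3: "3 \<le> length w" using w by simp
  have b: "w \<noteq> []" "hd w = 1" "last w = 1" using essentialD[OF w(1)] by auto
  show "length (excursions w) = r" using card_root_indices[OF b] w by simp
  show f: "length (filter starts_2 (excursions w)) = f" using card_steps_12[OF w(1) l3] w by simp
  have "length (branch_walk w) \<ge> 1" by (simp add: branch_walk_def)
  then show "length (branch_walk w) = 2 * (f + u) + 1" using card_steps_G2[OF w(1) l3] w f by simp
qed

lemma split_walk_in_split_range:
  assumes w: "w \<in> Lam1 l r u f"
  shows "split_walk w \<in> split_range l r u f"
proof -
  note L = Lam1D[OF w]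
  have ess: "essential w" and l3: "3 \<le> length w" using L by auto
  let ?A = "branch_walk w" and ?B = "rest_walk w"
  have nA: "?A \<noteq> []" "hd ?A = 1" and nB: "?B \<noteq> []" "hd ?B = 1"
    by (auto simp: branch_walk_def rest_walk_def)
  have lA: "length (canon ?A) = 2 * (f + u) + 1" using L canon_basics(3)[OF nA] by simp
  have lB: "length (canon ?B) = 2 * (l - u - f) + 1"
    using L length_branch_rest[OF ess l3] canon_basics(3)[OF nB] by simp
  have e1: "essential (canon ?A)" and e2: "essential (canon ?B)"
    using essential_canon_branch_rest[OF ess l3] by auto
  have "length (filter (\<lambda>e. \<not> starts_2 e) (excursions w)) = r - f"
    using L sum_length_filter_compl[of starts_2 "excursions w"] by simp
  then have roots: "card {i. i < 2 * (f + u) \<and> canon ?A ! i = 1} = f"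
    "card {i. i < 2 * (l - u - f) \<and> canon ?B ! i = 1} = r - f"
    using card_root_indices_essential[OF e1 lA] card_root_indices_essential[OF e2 lB]
      excursions_canon_branch_rest[OF ess l3] L by simp_all
  have "card {e \<in> wedges (canon ?A). 1 \<in> e} = 1"
    using root_edges_canon[OF nA] root_edges_branch[OF ess l3] by simp
  with e1 e2 lA lB roots L card_branch_slots[OF ess l3] show ?thesis
    unfolding split_walk_def split_range_def Lam2_def Lam_def by (auto simp: add.commute)
qed

section \<open>Merging two walks\<close>

fun interleave :: "bool list \<Rightarrow> 'a list \<Rightarrow> 'a list \<Rightarrow> 'a list" where
  "interleave [] xs ys = []"
| "interleave (b # bs) xs ys = (if b then hd xs # interleave bs (tl xs) ys else hd ys # interleave bs xs (tl ys))"

lemma filter_interleave: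
  assumes "length xs = length (filter id bs)" "length ys = length (filter Not bs)"
    "\<forall>x\<in>set xs. P x" "\<forall>y\<in>set ys. \<not> P y"
  shows "filter P (interleave bs xs ys) = xs \<and> filter (\<lambda>z. \<not> P z) (interleave bs xs ys) = ys \<and> map P (interleave bs xs ys) = bs"
  using assms
proof (induction bs arbitrary: xs ys)
  case (Cons b bs)
  then show ?case by (cases b; cases xs; cases ys) auto
qed simp

lemma interleave_map:
  assumes "length xs = length (filter id bs)" "length ys = length (filter Not bs)"
  shows "interleave bs (map F xs) (map F ys) = map F (interleave bs xs ys)"
  using assms
proof (induction bs arbitrary: xs ys)
  case (Cons b bs)
  show ?case
  proof (cases b)
    case True
    with Cons.prems obtain x xs' where "xs = x # xs'" by (cases xs) auto
    with Cons True show ?thesis by auto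
  next
    case False
    with Cons.prems obtain y ys' where "ys = y # ys'" by (cases ys) auto
    with Cons False show ?thesis by auto
  qed
qed simp

lemma interleave_filter: "interleave (map P zs) (filter P zs) (filter (\<lambda>z. \<not> P z) zs) = zs"
  by (induction zs) auto

lemma set_interleave:
  assumes "length xs = length (filter id bs)" "length ys = length (filter Not bs)"
  shows "set (interleave bs xs ys) = set xs \<union> set ys"
  using assms
proof (induction bs arbitrary: xs ys)
  case (Cons b bs)
  then show ?case by (cases b; cases xs; cases ys) auto
qed simp

text \<open>\<open>shift m\<close> keeps the root and moves the other labels of the second walk above the \<open>m\<close> labels
  of the first, so that the merged walk has fresh vertices in its second part.\<close>

definition shift :: "nat \<Rightarrow> nat \<Rightarrow> nat" where
  "shift m x = (if x = 1 then 1 else x + m - 1)"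

definition slot_mask :: "nat \<Rightarrow> nat set \<Rightarrow> bool list" where
  "slot_mask r S = map (\<lambda>k. k = 0 \<or> k \<in> S) [0..<r]"

definition merged_walk :: "nat \<Rightarrow> nat list \<times> nat list \<times> nat set \<Rightarrow> nat list" where
  "merged_walk r t = (case t of (w1, w2, S) \<Rightarrow>
     1 # concat (interleave (slot_mask r S) (excursions w1) (excursions (map (shift (card (set w1))) w2))))"

definition join_walk :: "nat \<Rightarrow> nat list \<times> nat list \<times> nat set \<Rightarrow> nat list" where
  "join_walk r t = canon (merged_walk r t)"

lemma excursions_map:
  assumes "\<forall>x\<in>set (tl w). g x = 1 \<longleftrightarrow> x = 1"
  shows "excursions (map g w) = map (map g) (excursions w)"
  using segments_map[OF assms] by (simp add: excursions_def map_tl[symmetric])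

lemma shift_eq_1_iff: "m \<ge> 1 \<Longrightarrow> x \<ge> 1 \<Longrightarrow> shift m x = 1 \<longleftrightarrow> x = 1"
  unfolding shift_def by (cases "x = 1") auto

lemma inj_on_shift: "m \<ge> 1 \<Longrightarrow> inj_on (shift m) {x. x \<ge> 1}"
  by (auto simp: inj_on_def shift_def split: if_splits)

lemma length_filter_id_map: "length (filter id (map P xs)) = length (filter P xs)"
  by (induction xs) auto

lemma length_filter_Not_map: "length (filter Not (map P xs)) = length (filter (\<lambda>x. \<not> P x) xs)"
  by (induction xs) auto

lemma set_concat_sub: "e \<in> set es \<Longrightarrow> set e \<subseteq> set (1 # concat es)"
  by auto

lemma inj_on_glued_rank:
  assumes iA: "inj_on gA VA" and iB: "inj_on gB VB" and leA: "\<forall>x\<in>VA. gA x \<le> m"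
    and posB: "\<forall>x\<in>VB. gB x \<ge> 1" and oneB: "\<forall>x\<in>VB. gB x = 1 \<longleftrightarrow> x = 1"
    and oA: "1 \<in> VA" and m: "m \<ge> 1"
  shows "inj_on (\<lambda>x. if x \<in> VA then gA x else shift m (gB x)) (VA \<union> VB)"
proof -
  let ?g = "\<lambda>x. if x \<in> VA then gA x else shift m (gB x)"
  have big: "m < shift m (gB x)" if "x \<in> VB - VA" for x
  proof -
    from that oA oneB posB have "2 \<le> gB x" by fastforce
    then show ?thesis by (simp add: shift_def)
  qed
  have "inj_on ?g VA" using iA by (auto simp: inj_on_def)
  moreover have "inj_on ?g (VB - VA)"
  proof (rule inj_onI)
    fix x y assume "x \<in> VB - VA" "y \<in> VB - VA" "?g x = ?g y"
    then have "gB x = gB y" using inj_onD[OF inj_on_shift[OF m]] posB by auto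
    with iB \<open>x \<in> VB - VA\<close> \<open>y \<in> VB - VA\<close> show "x = y" by (auto dest: inj_onD)
  qed
  moreover have "?g ` VA \<inter> ?g ` (VB - VA) = {}" using leA big by fastforce
  moreover have "VA - (VB - VA) = VA" "(VB - VA) - VA = VB - VA" by auto
  ultimately have "inj_on ?g (VA \<union> (VB - VA))" by (simp only: inj_on_Un)
  then show ?thesis by simp
qed

definition glue_label :: "nat list \<Rightarrow> nat \<Rightarrow> nat" where
  "glue_label w x = (if x \<in> set (branch_walk w) then rank (branch_walk w) x
     else shift (card (set (branch_walk w))) (rank (rest_walk w) x))"

lemma glue_label_1: "glue_label w 1 = 1"
  by (simp add: glue_label_def branch_walk_def rank_def)

context
  fixes w :: "nat list"
  assumes ess: "essential w" and len3: "3 \<le> length w"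
begin

lemma card_set_branch_ge_1: "1 \<le> card (set (branch_walk w))"
  by (simp add: branch_walk_def Suc_le_eq card_gt_0_iff)

lemma inj_on_glue_label: "inj_on (glue_label w) (set w)"
proof -
  let ?A = "branch_walk w" and ?B = "rest_walk w"
  have "inj_on (glue_label w) (set ?A \<union> set ?B)"
    unfolding glue_label_def
  proof (rule inj_on_glued_rank)
    show "\<forall>x\<in>set ?B. rank ?B x = 1 \<longleftrightarrow> x = 1"
      using rank_eq_1_iff[of ?B] by (simp add: rest_walk_def)
    show "\<forall>x\<in>set ?A. rank ?A x \<le> card (set ?A)" by (simp add: rank_le_card)
    show "\<forall>x\<in>set ?B. 1 \<le> rank ?B x" by (simp add: rank_def)
    show "1 \<in> set ?A" by (simp add: branch_walk_def)
  qed (use card_set_branch_ge_1 in \<open>simp_all add: inj_on_rank\<close>)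
  then show ?thesis using set_branch_rest_Un[OF ess len3] by simp
qed

lemma excursions_canon_branch_glue:
  "excursions (canon (branch_walk w)) = map (map (glue_label w)) (filter starts_2 (excursions w))"
  unfolding excursions_canon_branch_rest(1)[OF ess len3]
  by (intro map_cong refl) (auto simp: glue_label_def branch_walk_def)

lemma excursions_shift_canon_rest_glue:
  "excursions (map (shift (card (set (branch_walk w)))) (canon (rest_walk w))) =
    map (map (glue_label w)) (filter (\<lambda>e. \<not> starts_2 e) (excursions w))"
proof -
  let ?m = "card (set (branch_walk w))" and ?B = "rest_walk w"
  have "\<forall>x\<in>set (tl (canon ?B)). shift ?m x = 1 \<longleftrightarrow> x = 1"
    using shift_eq_1_iff[OF card_set_branch_ge_1] by (auto simp: canon_def rest_walk_def rank_def)
  then have "excursions (map (shift ?m) (canon ?B)) =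
      map (map (shift ?m \<circ> rank ?B)) (filter (\<lambda>e. \<not> starts_2 e) (excursions w))"
    using excursions_map excursions_canon_branch_rest(2)[OF ess len3] by simp
  also have "\<dots> = map (map (glue_label w)) (filter (\<lambda>e. \<not> starts_2 e) (excursions w))"
  proof (intro map_cong refl)
    fix e x assume "e \<in> set (filter (\<lambda>e. \<not> starts_2 e) (excursions w))" "x \<in> set e"
    then have xB: "x \<in> set ?B" by (auto simp: rest_walk_def)
    show "(shift ?m \<circ> rank ?B) x = glue_label w x"
    proof (cases "x = 1")
      case True
      then show ?thesis using glue_label_1 by (simp add: shift_def rest_walk_def rank_def)
    next
      case False
      with xB set_branch_rest_Int[OF ess len3] have "x \<notin> set (branch_walk w)" by auto
      then show ?thesis by (simp add: glue_label_def)
    qed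
  qed
  finally show ?thesis .
qed

end

lemma slot_mask_split_walk:
  assumes "w \<in> Lam1 l r u f"
  shows "slot_mask r (snd (snd (split_walk w))) = map starts_2 (excursions w)"
proof -
  note L = Lam1D[OF assms]
  have "starts_2 (excursions w ! 0)"
    using excursions_not_Nil[OF L(1,4)] hd_hd_excursions[OF L(1,4)] by (simp add: starts_2_def hd_conv_nth)
  then show ?thesis using L by (intro nth_equalityI) (auto simp: slot_mask_def split_walk_def)
qed

text \<open>Merging the canonical parts reproduces the walk up to the injective relabelling
  \<open>glue_label\<close>, which \<open>canon\<close> then undoes.\<close>

lemma merged_walk_split_walk:
  assumes "w \<in> Lam1 l r u f"
  shows "merged_walk r (split_walk w) = map (glue_label w) w"
proof -
  note L = Lam1D[OF assms]
  let ?es = "excursions w" and ?G = "glue_label w"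
  have len: "length (filter starts_2 ?es) = length (filter id (map starts_2 ?es))"
    "length (filter (\<lambda>e. \<not> starts_2 e) ?es) = length (filter Not (map starts_2 ?es))"
    by (simp_all add: length_filter_id_map length_filter_Not_map comp_def)
  have "card (set (canon (branch_walk w))) = card (set (branch_walk w))"
    using card_image[OF inj_on_rank] by (simp add: canon_def)
  then have "merged_walk r (split_walk w) = 1 # concat (interleave (map starts_2 ?es)
      (map (map ?G) (filter starts_2 ?es)) (map (map ?G) (filter (\<lambda>e. \<not> starts_2 e) ?es)))"
    using slot_mask_split_walk[OF assms] excursions_canon_branch_glue[OF L(1,4)]
      excursions_shift_canon_rest_glue[OF L(1,4)]
    by (simp add: merged_walk_def split_walk_def del: map_map)
  also have "\<dots> = 1 # concat (map (map ?G) ?es)"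
    using interleave_map[OF len, of "map ?G"] by (simp add: interleave_filter)
  also have "\<dots> = map ?G (1 # concat ?es)" using glue_label_1[of w] by (simp add: map_concat)
  also have "\<dots> = map ?G w" using walk_excursions(1)[OF L(1,4)] by simp
  finally show ?thesis .
qed

lemma join_split_walk:
  assumes "w \<in> Lam1 l r u f"
  shows "join_walk r (split_walk w) = w"
  using merged_walk_split_walk[OF assms] canon_map[OF inj_on_glue_label] canon_minimal_walk
    Lam1D(1,4)[OF assms] essentialD(7)
  by (simp add: join_walk_def)

lemma is_segment_map:
  assumes "is_segment e" "\<forall>x\<in>set e. g x = 1 \<longleftrightarrow> x = 1"
  shows "is_segment (map g e)"
proof -
  have "e \<noteq> []" "last e = 1" "1 \<notin> set (butlast e)" using assms(1) by (auto simp: is_segment_def)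
  moreover have "\<forall>x\<in>set (butlast e). g x \<noteq> 1"
    using assms(2) calculation(3) by (metis in_set_butlastD)
  moreover have "g (last e) = 1" using assms(2) calculation(1,2) by (metis last_in_set)
  ultimately show ?thesis using assms(2) by (auto simp: is_segment_def last_map map_butlast[symmetric])
qed

context
  fixes l r u f :: nat and w1 w2 :: "nat list" and S :: "nat set"
    and m :: nat and w2' :: "nat list" and es1 es2 :: "nat list list" and bs :: "bool list"
    and M :: "nat list"
  assumes t: "(w1, w2, S) \<in> split_range l r u f" and f1: "1 \<le> f" and fr: "f \<le> r" and ur: "u + r \<le> l"
    and m_def: "m = card (set w1)" and w2'_def: "w2' = map (shift m) w2"
    and es1_def: "es1 = excursions w1" and es2_def: "es2 = excursions w2'" and bs_def: "bs = slot_mask r S"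
    and M_def: "M = 1 # concat (interleave bs es1 es2)"
begin

lemma w1_props: "essential w1" "length w1 = 2 * (f + u) + 1" "length (excursions w1) = f"
  "card {e \<in> wedges w1. 1 \<in> e} = 1" "3 \<le> length w1"
  using t f1 card_root_indices_essential[of w1 "f + u"] by (auto simp: split_range_def Lam2_def Lam_def)

lemma w2_props: "essential w2" "length w2 = 2 * (l - u - f) + 1" "length (excursions w2) = r - f"
  using t card_root_indices_essential[of w2 "l - u - f"] by (auto simp: split_range_def Lam_def)

lemma S_props: "S \<subseteq> {1..<r}" "card S = f - 1"
  using t by (auto simp: split_range_def)

lemma excursions_w1: "\<forall>e\<in>set es1. is_segment e \<and> starts_2 e" "es1 \<noteq> []"
proof -
  show "es1 \<noteq> []" using excursions_not_Nil[OF w1_props(1,5)] by (simp add: es1_def)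
  show "\<forall>e\<in>set es1. is_segment e \<and> starts_2 e"
  proof
    fix e assume e: "e \<in> set es1"
    have ch: "is_segment e" using walk_excursions(2)[OF w1_props(1,5)] e by (simp add: es1_def)
    obtain b where b: "e = b @ [1]" "1 \<notin> set b" "b \<noteq> []" "hd b \<noteq> 1" "hd e = hd b"
      using excursionE[OF w1_props(1,5)] e es1_def by metis
    have "(1, hd b) \<in> set (steps (1 # e))" using steps_segment[OF b(3)] b(1) by simp
    then have "(1, hd b) \<in> set (steps w1)" using steps_excursion_subset[OF w1_props(1,5)] e es1_def by blast
    then have "{1, hd b} \<in> wedges w1" by (force simp: wedges_steps edge_of_def)
    then have "{1, hd b} \<in> {e \<in> wedges w1. 1 \<in> e}" by simp
    moreover have "{1, 2} \<in> {e \<in> wedges w1. 1 \<in> e}" using edge_12_in_wedges[OF w1_props(1,5)] by simp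
    moreover obtain z where "{e \<in> wedges w1. 1 \<in> e} = {z}"
      using card_1_singletonE[OF w1_props(4)] .
    ultimately have "{1, hd b} = {1, 2}" by (metis (no_types, lifting) singletonD)
    then have "hd b = 2" using b(4) by (auto simp: doubleton_eq_iff)
    then show "is_segment e \<and> starts_2 e" using ch b(5) by (simp add: starts_2_def)
  qed
qed

lemma labels_w1: "\<forall>x\<in>set w1. 1 \<le> x \<and> x \<le> m" "2 \<le> m" "1 \<in> set w1" "2 \<in> set w1"
proof -
  show "\<forall>x\<in>set w1. 1 \<le> x \<and> x \<le> m"
    using minimal_walk_le_card[OF essentialD(7)[OF w1_props(1)]] essential_pos[OF w1_props(1)] m_def by auto
  show o: "1 \<in> set w1" using essentialD(1,2)[OF w1_props(1)] by (metis list.set_sel(1))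
  have "1 < length w1" using w1_props(5) by simp
  then have "w1 ! 1 \<in> set w1" by (rule nth_mem)
  then show t2: "2 \<in> set w1" using nth_1_eq_2[OF w1_props(1,5)] by simp
  have "card {1, 2::nat} \<le> card (set w1)" using o t2 by (intro card_mono) auto
  then show "2 \<le> m" using m_def by simp
qed

lemma shift_w2_eq_1_iff: "\<forall>x\<in>set w2. shift m x = 1 \<longleftrightarrow> x = 1"
  using shift_eq_1_iff labels_w1(2) essential_pos[OF w2_props(1)] by auto

lemma inj_on_shift_w2: "inj_on (shift m) (set w2)"
  using inj_on_shift[of m] labels_w1(2) essential_pos[OF w2_props(1)] by (rule_tac inj_on_subset) auto

lemma excursions_w2': "es2 = map (map (shift m)) (excursions w2)" "\<forall>e\<in>set es2. is_segment e \<and> \<not> starts_2 e" "length es2 = r - f"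
proof -
  have ne2: "w2 \<noteq> []" using essentialD(1)[OF w2_props(1)] .
  have "\<forall>x\<in>set (tl w2). shift m x = 1 \<longleftrightarrow> x = 1" using shift_w2_eq_1_iff by (meson list.set_sel(2) ne2)
  then show e2: "es2 = map (map (shift m)) (excursions w2)" using excursions_map by (simp add: es2_def w2'_def)
  then show "length es2 = r - f" using w2_props(3) by simp
  show "\<forall>e\<in>set es2. is_segment e \<and> \<not> starts_2 e"
  proof (cases "3 \<le> length w2")
    case False
    then have "length w2 = 1" using w2_props(2) by simp
    then have "tl w2 = []" by (cases w2) auto
    then show ?thesis using e2 by (simp add: excursions_def)
  next
    case True
    show ?thesis
    proof
      fix e assume "e \<in> set es2"
      then obtain e' where e': "e' \<in> set (excursions w2)" "e = map (shift m) e'" using e2 by auto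
      obtain b where b: "e' = b @ [1]" "1 \<notin> set b" "b \<noteq> []" "hd b \<noteq> 1" "hd e' = hd b"
        using excursionE[OF w2_props(1) True e'(1)] by metis
      have ch: "is_segment e'" using walk_excursions(2)[OF w2_props(1) True] e'(1) by simp
      have sw: "set e' \<subseteq> set w2" using e'(1) walk_excursions(1)[OF w2_props(1) True] by (metis set_concat_sub)
      have "is_segment e" using is_segment_map[OF ch] shift_w2_eq_1_iff sw e'(2) by auto
      moreover have "hd b \<in> set w2" using sw b by auto
      then have "hd b \<ge> 2" using essential_pos[OF w2_props(1)] b(4) by fastforce
      then have "hd e \<noteq> 2" using e'(2) b labels_w1(2) by (simp add: shift_def hd_map)
      ultimately show "is_segment e \<and> \<not> starts_2 e" by (simp add: starts_2_def)
    qed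
  qed
qed

lemma mask_props: "length bs = r" "length (filter id bs) = f" "length (filter Not bs) = r - f" "bs ! 0"
proof -
  show lb: "length bs = r" by (simp add: bs_def slot_mask_def)
  have r1: "r \<ge> 1" using f1 fr by simp
  have "length (filter id bs) = card {k. k < length bs \<and> id (bs ! k)}" by (rule length_filter_conv_card)
  also have "{k. k < length bs \<and> id (bs ! k)} = insert 0 S"
    using S_props(1) r1 by (auto simp: bs_def slot_mask_def)
  also have "card (insert 0 S) = f" using S_props f1 by (subst card_insert_disjoint) (auto intro: finite_subset)
  finally show f: "length (filter id bs) = f" .
  have "length (filter id bs) + length (filter (\<lambda>x. \<not> id x) bs) = length bs" by (rule sum_length_filter_compl)
  then show "length (filter Not bs) = r - f" using f lb by simp
  show "bs ! 0" using r1 by (simp add: bs_def slot_mask_def)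
qed

lemma length_excursions_mask: "length es1 = length (filter id bs)" "length es2 = length (filter Not bs)"
  using w1_props(3) excursions_w2'(3) mask_props by (auto simp: es1_def)

lemma excursions_M: "set (interleave bs es1 es2) = set es1 \<union> set es2" "\<forall>e\<in>set (interleave bs es1 es2). is_segment e"
  "excursions M = interleave bs es1 es2"
proof -
  show s: "set (interleave bs es1 es2) = set es1 \<union> set es2" using set_interleave[OF length_excursions_mask] .
  show c: "\<forall>e\<in>set (interleave bs es1 es2). is_segment e" using s excursions_w1(1) excursions_w2'(2) by auto
  show "excursions M = interleave bs es1 es2" using segments_concat[OF c] by (simp add: excursions_def M_def)
qed

lemma w2'_props: "w2' \<noteq> []" "hd w2' = 1" "last w2' = 1" "tree_walk w2'" "\<forall>x\<in>set w2'. 1 \<le> x"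
proof -
  have b: "w2 \<noteq> []" "hd w2 = 1" "last w2 = 1" "tree_walk w2" using essentialD[OF w2_props(1)] by auto
  show "w2' \<noteq> []" "hd w2' = 1" "last w2' = 1" using b by (auto simp: w2'_def shift_def hd_map last_map)
  show "tree_walk w2'" using tree_walk_map[OF inj_on_shift_w2 b(1)] b(4) by (simp add: w2'_def)
  show "\<forall>x\<in>set w2'. 1 \<le> x" using essential_pos[OF w2_props(1)] labels_w1(2) by (auto simp: w2'_def shift_def)
qed

lemma w1_w2'_decomp: "w1 = 1 # concat es1" "w2' = 1 # concat es2"
  using walk_excursions(1)[OF w1_props(1,5)] excursions_decomp(1)[OF w2'_props(1-3)] by (auto simp: es1_def es2_def)

lemma set_steps_M: "set M = set w1 \<union> set w2'" "set (steps M) = set (steps w1) \<union> set (steps w2')"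
  "wedges M = wedges w1 \<union> wedges w2'"
proof -
  have "set M = insert 1 (\<Union> (set ` (set es1 \<union> set es2)))" by (simp add: M_def excursions_M(1))
  moreover have "set w1 = set (1 # concat es1)" using w1_w2'_decomp(1) by (rule arg_cong)
  moreover have "set w2' = set (1 # concat es2)" using w1_w2'_decomp(2) by (rule arg_cong)
  ultimately show "set M = set w1 \<union> set w2'" by auto
  have c1: "\<forall>e\<in>set es1. e \<noteq> [] \<and> last e = 1" using excursions_w1(1) by (auto simp: is_segment_def)
  have c2: "\<forall>e\<in>set es2. e \<noteq> [] \<and> last e = 1" using excursions_w2'(2) by (auto simp: is_segment_def)
  have c: "\<forall>e\<in>set (interleave bs es1 es2). e \<noteq> [] \<and> last e = 1" using excursions_M(1) c1 c2 by auto
  have "set (steps M) = (\<Union>e\<in>set (interleave bs es1 es2). set (steps (1 # e)))"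
    unfolding M_def using steps_concat_segments[OF c] by simp
  moreover have "set (steps w1) = (\<Union>e\<in>set es1. set (steps (1 # e)))"
  proof -
    have "set (steps w1) = set (steps (1 # concat es1))" using w1_w2'_decomp(1) by (rule arg_cong)
    also have "\<dots> = set (concat (map (\<lambda>e. steps (1 # e)) es1))" by (simp only: steps_concat_segments[OF c1])
    finally show ?thesis by simp
  qed
  moreover have "set (steps w2') = (\<Union>e\<in>set es2. set (steps (1 # e)))"
  proof -
    have "set (steps w2') = set (steps (1 # concat es2))" using w1_w2'_decomp(2) by (rule arg_cong)
    also have "\<dots> = set (concat (map (\<lambda>e. steps (1 # e)) es2))" by (simp only: steps_concat_segments[OF c2])
    finally show ?thesis by simp
  qed
  ultimately show sp: "set (steps M) = set (steps w1) \<union> set (steps w2')" using excursions_M(1) by auto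
  show "wedges M = wedges w1 \<union> wedges w2'" by (simp add: wedges_steps sp image_Un)
qed

lemma tree_M: "closed_walk M" "tree_walk M"
proof -
  have pos1: "\<forall>x\<in>set w1. 0 < x" using labels_w1(1) by auto
  have pos2: "\<forall>x\<in>set w2'. 0 < x" using w2'_props(5) by auto
  have "\<forall>x\<in>set (concat (interleave bs es1 es2)). 0 < x"
    using set_steps_M(1) pos1 pos2 by (auto simp: M_def)
  then show "closed_walk M" unfolding M_def by (rule closed_walk_root_concat[OF excursions_M(2)])
  have t1: "tree_walk w1" using essentialD(5)[OF w1_props(1)] .
  have t2: "tree_walk w2'" using w2'_props(4) .
  have ne1: "w1 \<noteq> []" using essentialD(1)[OF w1_props(1)] .
  have nl: "loop_free M" using t1 t2 ne1 w2'_props(1) tree_walk_iff set_steps_M(2) unfolding loop_free_def by blast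
  have int: "set w1 \<inter> set w2' \<subseteq> {1}"
  proof
    fix x assume x: "x \<in> set w1 \<inter> set w2'"
    then have "x \<le> m" using labels_w1(1) by auto
    moreover obtain y where y: "y \<in> set w2" "x = shift m y" using x by (auto simp: w2'_def)
    moreover have "y \<ge> 1" using essential_pos[OF w2_props(1) y(1)] .
    ultimately show "x \<in> {1}" by (cases "y = 1") (auto simp: shift_def)
  qed
  have nc: "\<not> has_cycle (set w1 \<union> set w2') (wedges w1 \<union> wedges w2')"
    by (rule no_cycle_Un_cut_vertex[OF _ _ int]) (use t1 t2 ne1 w2'_props(1) tree_walk_iff simple_graph_walk_iff in auto)
  have "M \<noteq> []" by (simp add: M_def)
  then show "tree_walk M" using tree_walk_iff nl nc set_steps_M(1,3) by simp
qed

lemma M_start: "3 \<le> length M" "M ! 1 = 2"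
proof -
  obtain e es1' where ee: "es1 = e # es1'" using excursions_w1(2) by (cases es1) auto
  obtain bs' where bb: "bs = True # bs'" using mask_props(1,4) f1 fr by (cases bs) auto
  have e: "is_segment e" "starts_2 e" using excursions_w1(1) ee by auto
  have "e \<in> set (excursions w1)" using ee es1_def by simp
  then obtain b where b: "e = b @ [1]" "b \<noteq> []" using excursionE[OF w1_props(1,5)] by metis
  have "M = 1 # b @ [1] @ concat (interleave bs' es1' es2)" using ee bb b by (simp add: M_def)
  then show "3 \<le> length M" "M ! 1 = 2" using b e(2) by (auto simp: starts_2_def hd_conv_nth nth_append Suc_le_eq)
qed

lemma essential_canon_M: "essential (canon M)" "length (canon M) = length M" "3 \<le> length (canon M)"
proof -
  show "essential (canon M)" using essential_canon[OF tree_M] .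
  show "length (canon M) = length M" by (simp add: canon_def)
  then show "3 \<le> length (canon M)" using M_start(1) by simp
qed

lemma rank_M: "rank M 1 = 1" "rank M 2 = 2" "2 \<in> set M"
proof -
  obtain rest where "M = 1 # 2 # rest" using M_start by (cases M; cases "tl M") (auto simp: M_def)
  then show "rank M 1 = 1" "rank M 2 = 2" "2 \<in> set M" by (simp_all add: rank_def)
qed

lemma excursions_canon_M: "excursions (canon M) = map (map (rank M)) (interleave bs es1 es2)"
  using excursions_canon[of M] excursions_M(3) by (simp add: M_def)

lemma starts_2_rank_M: "e \<in> set (interleave bs es1 es2) \<Longrightarrow> starts_2 (map (rank M) e) \<longleftrightarrow> starts_2 e"
proof -
  assume e: "e \<in> set (interleave bs es1 es2)"
  then have ne: "e \<noteq> []" using excursions_M(2) by (auto simp: is_segment_def)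
  have "hd e \<in> set e" using ne by simp
  then have "hd e \<in> set M" using e by (auto simp: M_def)
  then have "rank M (hd e) = rank M 2 \<longleftrightarrow> hd e = 2" using inj_on_rank[of M] rank_M(3) by (auto dest: inj_onD)
  then show ?thesis using ne rank_M(2) by (simp add: starts_2_def hd_map)
qed

lemma filter_excursions_canon_M: "filter starts_2 (excursions (canon M)) = map (map (rank M)) es1"
  "filter (\<lambda>e. \<not> starts_2 e) (excursions (canon M)) = map (map (rank M)) es2"
  "map starts_2 (excursions (canon M)) = bs"
proof -
  have mf: "filter starts_2 (interleave bs es1 es2) = es1 \<and> filter (\<lambda>z. \<not> starts_2 z) (interleave bs es1 es2) = es2 \<and> map starts_2 (interleave bs es1 es2) = bs"
    by (rule filter_interleave[OF length_excursions_mask]) (use excursions_w1(1) excursions_w2'(2) in auto)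
  have c1: "filter (starts_2 \<circ> map (rank M)) (interleave bs es1 es2) = filter starts_2 (interleave bs es1 es2)"
    by (rule filter_cong) (auto simp: starts_2_rank_M)
  have c2: "filter ((\<lambda>e. \<not> starts_2 e) \<circ> map (rank M)) (interleave bs es1 es2) = filter (\<lambda>e. \<not> starts_2 e) (interleave bs es1 es2)"
    by (rule filter_cong) (auto simp: starts_2_rank_M)
  show "filter starts_2 (excursions (canon M)) = map (map (rank M)) es1"
    unfolding excursions_canon_M filter_map c1 using mf by simp
  show "filter (\<lambda>e. \<not> starts_2 e) (excursions (canon M)) = map (map (rank M)) es2"
    unfolding excursions_canon_M filter_map c2 using mf by simp
  have "map starts_2 (excursions (canon M)) = map starts_2 (interleave bs es1 es2)"
    unfolding excursions_canon_M by (auto simp: starts_2_rank_M)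
  then show "map starts_2 (excursions (canon M)) = bs" using mf by simp
qed

lemma branch_rest_canon_M: "branch_walk (canon M) = map (rank M) w1" "rest_walk (canon M) = map (rank M) w2'"
proof -
  have "map (rank M) w1 = map (rank M) (1 # concat es1)" using w1_w2'_decomp(1) by (rule arg_cong)
  also have "\<dots> = 1 # concat (map (map (rank M)) es1)" using rank_M(1) by (simp add: map_concat)
  finally show "branch_walk (canon M) = map (rank M) w1" by (simp add: branch_walk_def filter_excursions_canon_M(1))
  have "map (rank M) w2' = map (rank M) (1 # concat es2)" using w1_w2'_decomp(2) by (rule arg_cong)
  also have "\<dots> = 1 # concat (map (map (rank M)) es2)" using rank_M(1) by (simp add: map_concat)
  finally show "rest_walk (canon M) = map (rank M) w2'" by (simp add: rest_walk_def filter_excursions_canon_M(2))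
qed

lemma split_join_walk: "split_walk (canon M) = (w1, w2, S)"
proof -
  have i1: "inj_on (rank M) (set w1)" using inj_on_rank[of M] set_steps_M(1) by (metis inj_on_Un)
  have "canon (map (rank M) w1) = w1" using canon_map[OF i1] canon_minimal_walk[OF essentialD(7)[OF w1_props(1)]] by simp
  moreover have "canon (map (rank M) w2') = w2"
  proof -
    have i2: "inj_on (rank M) (shift m ` set w2)" using inj_on_rank[of M] set_steps_M(1) by (metis inj_on_Un list.set_map w2'_def)
    have "inj_on (rank M \<circ> shift m) (set w2)" using comp_inj_on[OF inj_on_shift_w2 i2] .
    then have "canon (map (rank M \<circ> shift m) w2) = w2" using canon_map canon_minimal_walk[OF essentialD(7)[OF w2_props(1)]] by metis
    then show ?thesis by (simp add: w2'_def)
  qed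
  moreover have "{k. 1 \<le> k \<and> k < length (excursions (canon M)) \<and> starts_2 (excursions (canon M) ! k)} = S"
  proof -
    have lc: "length (excursions (canon M)) = r" using filter_excursions_canon_M(3) mask_props(1) by (metis length_map)
    have "starts_2 (excursions (canon M) ! k) = bs ! k" if "k < r" for k
      using filter_excursions_canon_M(3) that lc by (metis nth_map)
    then have "{k. 1 \<le> k \<and> k < length (excursions (canon M)) \<and> starts_2 (excursions (canon M) ! k)} = {k. 1 \<le> k \<and> k < r \<and> bs ! k}"
      using lc by auto
    also have "\<dots> = S" using S_props(1) by (auto simp: bs_def slot_mask_def)
    finally show ?thesis .
  qed
  ultimately show ?thesis by (simp add: split_walk_def branch_rest_canon_M)
qed

lemma join_walk_in_Lam1: "canon M \<in> Lam1 l r u f"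
proof -
  note e = essential_canon_M(1) and l3 = essential_canon_M(3)
  have lA: "length (branch_walk (canon M)) = 2 * (f + u) + 1" using branch_rest_canon_M(1) w1_props(2) by simp
  have lB: "length (rest_walk (canon M)) = 2 * (l - u - f) + 1" using branch_rest_canon_M(2) w2_props(2) by (simp add: w2'_def)
  have len: "length (canon M) = 2 * l + 1" using length_branch_rest[OF e l3] lA lB f1 fr ur by simp
  have rc: "card {i. i < 2 * l \<and> canon M ! i = 1} = r"
    using card_root_indices_essential[OF e len] filter_excursions_canon_M(3) mask_props(1) by (metis length_map)
  have fa: "length (filter starts_2 (excursions (canon M))) = f" using filter_excursions_canon_M(1) w1_props(3) by (simp add: es1_def)
  have cF: "card {i. i < 2 * l \<and> canon M ! i = 1 \<and> canon M ! (i + 1) = 2} = f"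
    using card_steps_12[OF e l3] len fa by simp
  have cG: "card {i. i < 2 * l \<and> {canon M ! i, canon M ! (i + 1)} \<in> G2edges (canon M)} = 2 * u"
    using card_steps_G2[OF e l3] len fa lA by simp
  have l0: "0 < l" using f1 fr ur by simp
  show ?thesis unfolding Lam1_def Lam_def using e len rc cF cG l0 by simp
qed
end

section \<open>The bijection and the factorisation of the weights\<close>

lemma join_walk_split_range:
  assumes t: "t \<in> split_range l r u f" and f1: "1 \<le> f" and fr: "f \<le> r" and ur: "u + r \<le> l"
  shows "join_walk r t \<in> Lam1 l r u f" "split_walk (join_walk r t) = t"
proof -
  obtain w1 w2 S where tt: "t = (w1, w2, S)" by (cases t) auto
  have M: "merged_walk r (w1, w2, S) = 1 # concat (interleave (slot_mask r S) (excursions w1) (excursions (map (shift (card (set w1))) w2)))"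
    by (simp add: merged_walk_def)
  show "join_walk r t \<in> Lam1 l r u f" unfolding tt join_walk_def M
    by (rule join_walk_in_Lam1[OF t[unfolded tt] f1 fr ur refl refl refl refl refl refl])
  show "split_walk (join_walk r t) = t" unfolding tt join_walk_def M
    by (rule split_join_walk[OF t[unfolded tt] f1 fr ur refl refl refl refl refl refl])
qed

lemma bij_betw_split_walk:
  assumes f1: "1 \<le> f" and fr: "f \<le> r" and ur: "u + r \<le> l"
  shows "bij_betw split_walk (Lam1 l r u f) (split_range l r u f)"
proof (rule bij_betw_byWitness[where f' = "join_walk r"])
  show "\<forall>a\<in>Lam1 l r u f. join_walk r (split_walk a) = a" using join_split_walk by blast
  show "\<forall>a'\<in>split_range l r u f. split_walk (join_walk r a') = a'" using join_walk_split_range(2)[OF _ f1 fr ur] by blast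
  show "split_walk ` Lam1 l r u f \<subseteq> split_range l r u f" using split_walk_in_split_range by blast
  show "join_walk r ` split_range l r u f \<subseteq> Lam1 l r u f" using join_walk_split_range(1)[OF _ f1 fr ur] by blast
qed

lemma card_slot_sets: "card {S. S \<subseteq> {1..<r} \<and> card S = f - 1} = (r - 1) choose (f - 1)"
  using n_subsets[of "{1..<r}" "f - 1"] by simp

lemma sum_split_range:
  "(\<Sum>t\<in>split_range l r u f. c * g (fst t) * h (fst (snd t))) =
     c * real ((r - 1) choose (f - 1)) * (\<Sum>a\<in>Lam2 (f + u) f. g a) * (\<Sum>b\<in>Lam (l - u - f) (r - f). h b)"
proof -
  let ?C = "{S. S \<subseteq> {1..<r} \<and> card S = f - 1}"
  have "(\<Sum>t\<in>split_range l r u f. c * g (fst t) * h (fst (snd t))) =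
      (\<Sum>a\<in>Lam2 (f + u) f. \<Sum>b\<in>Lam (l - u - f) (r - f). \<Sum>S\<in>?C. c * g a * h b)"
    by (simp only: split_range_def sum.cartesian_product' fst_conv snd_conv)
  also have "\<dots> = c * real (card ?C) * (\<Sum>a\<in>Lam2 (f + u) f. g a) * (\<Sum>b\<in>Lam (l - u - f) (r - f). h b)"
    by (simp add: sum_distrib_left sum_distrib_right mult_ac)
  finally show ?thesis unfolding card_slot_sets .
qed

lemma Ssum_Lam1_factor:
  fixes \<theta> :: "nat list \<Rightarrow> real"
  assumes "1 \<le> f" "f \<le> r" "u + r \<le> l" and "c \<noteq> 0"
    and factor: "\<And>w. essential w \<Longrightarrow> 3 \<le> length w \<Longrightarrow>
      \<theta> w * c = \<theta> (canon (branch_walk w)) * \<theta> (canon (rest_walk w))"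
  shows "Ssum \<theta> (Lam1 l r u f) =
    inverse c * real ((r - 1) choose (f - 1)) * Ssum \<theta> (Lam2 (f + u) f) * Ssum \<theta> (Lam (l - u - f) (r - f))"
proof -
  have "\<theta> w = inverse c * \<theta> (fst (split_walk w)) * \<theta> (fst (snd (split_walk w)))"
    if "w \<in> Lam1 l r u f" for w
    using factor[OF Lam1D(1,4)[OF that]] \<open>c \<noteq> 0\<close> by (simp add: split_walk_def field_simps)
  then have "Ssum \<theta> (Lam1 l r u f) =
      (\<Sum>w\<in>Lam1 l r u f. (\<lambda>t. inverse c * \<theta> (fst t) * \<theta> (fst (snd t))) (split_walk w))"
    unfolding Ssum_def by (intro sum.cong refl) simp
  also have "\<dots> = (\<Sum>t\<in>split_range l r u f. inverse c * \<theta> (fst t) * \<theta> (fst (snd t)))"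
    by (rule sum.reindex_bij_betw[OF bij_betw_split_walk[OF assms(1-3)]])
  finally show ?thesis by (simp add: sum_split_range Ssum_def)
qed

section \<open>Partition of \<open>Lam l r\<close>\<close>

lemma finite_Lam: "finite (Lam l r)"
proof -
  have "Lam l r \<subseteq> {xs. set xs \<subseteq> {0..2 * l + 1} \<and> length xs = 2 * l + 1}"
  proof
    fix w assume w: "w \<in> Lam l r"
    then have e: "essential w" "length w = 2 * l + 1" by (auto simp: Lam_def)
    have "\<forall>x\<in>set w. x \<le> 2 * l + 1"
    proof
      fix x assume "x \<in> set w"
      then have "x \<le> card (set w)" using minimal_walk_le_card essentialD(7)[OF e(1)] by blast
      also have "\<dots> \<le> length w" by (rule card_length)
      finally show "x \<le> 2 * l + 1" using e by simp
    qed
    then show "w \<in> {xs. set xs \<subseteq> {0..2 * l + 1} \<and> length xs = 2 * l + 1}" using e by auto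
  qed
  moreover have "finite {xs. set xs \<subseteq> {0..2 * l + 1} \<and> length xs = (2 * l + 1 :: nat)}"
    by (rule finite_lists_length_eq) simp
  ultimately show ?thesis by (rule finite_subset)
qed

lemma even_length_concat: "\<forall>e\<in>set es. even (length e) \<Longrightarrow> even (length (concat es))"
  by (induction es) auto

lemma length_concat_ge2: "\<forall>e\<in>set es. 2 \<le> length e \<Longrightarrow> 2 * length es \<le> length (concat es)"
  by (induction es) auto

definition count_12 :: "nat \<Rightarrow> nat list \<Rightarrow> nat" where
  "count_12 l w = card {i. i < 2 * l \<and> w ! i = 1 \<and> w ! (i + 1) = 2}"

definition count_G2 :: "nat \<Rightarrow> nat list \<Rightarrow> nat" where
  "count_G2 l w = card {i. i < 2 * l \<and> {w ! i, w ! (i + 1)} \<in> G2edges w}"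

lemma Lam_params:
  assumes w: "w \<in> Lam l r" and lr: "(l, r) \<noteq> (0, 0)"
  shows "0 < l" "1 \<le> count_12 l w" "count_12 l w \<le> r" "even (count_G2 l w)" "count_G2 l w div 2 + r \<le> l"
proof -
  have h: "essential w" "length w = 2 * l + 1" "card {i. i < 2 * l \<and> w ! i = 1} = r"
    using w by (auto simp: Lam_def)
  show l0: "0 < l" using h(3) lr by (cases "l = 0") auto
  then have l3: "3 \<le> length w" using h(2) by simp
  let ?A = "filter starts_2 (excursions w)" and ?B = "filter (\<lambda>e. \<not> starts_2 e) (excursions w)"
  have rA: "length ?A + length ?B = r"
    using card_root_indices_essential[OF h(1,2)] h(3) sum_length_filter_compl[of starts_2] by simp
  have cf: "count_12 l w = length ?A" using card_steps_12[OF h(1) l3] h(2) by (simp add: count_12_def)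
  have cg: "count_G2 l w + 2 * length ?A = length (concat ?A)"
    using card_steps_G2[OF h(1) l3] h(2) by (simp add: count_G2_def branch_walk_def)
  have "hd (excursions w) \<in> set ?A"
    using excursions_not_Nil[OF h(1) l3] hd_hd_excursions[OF h(1) l3] by (simp add: starts_2_def)
  then show "1 \<le> count_12 l w" using cf by (cases ?A) auto
  show "count_12 l w \<le> r" using cf rA by simp
  have "even (length (concat ?A))"
    using even_length_excursion[OF h(1) l3] by (intro even_length_concat) simp
  then have "even (count_G2 l w + 2 * length ?A)" by (simp only: cg)
  then show ev: "even (count_G2 l w)" by simp
  have "2 * length ?B \<le> length (concat ?B)"
    using length_excursion_ge_2[OF h(1) l3] by (intro length_concat_ge2) simp
  moreover have "length (concat ?A) + length (concat ?B) = 2 * l"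
    using length_concat_filter_compl[of starts_2 "excursions w"] walk_excursions(1)[OF h(1) l3] h(2)
    by (metis add_right_cancel length_Cons plus_1_eq_Suc add.commute)
  ultimately show "count_G2 l w div 2 + r \<le> l" using cg cf rA ev by (elim evenE) linarith
qed

lemma Ssum_Lam_partition:
  fixes \<theta> :: "nat list \<Rightarrow> real"
  assumes lr: "(l, r) \<noteq> (0, 0)"
  shows "Ssum \<theta> (Lam l r) = (\<Sum>f\<in>{1..r}. \<Sum>u\<in>{u. u + r \<le> l}. Ssum \<theta> (Lam1 l r u f))"
proof -
  let ?U = "{u. u + r \<le> l}"
  define sel where "sel w f u = (if 2 * u = count_G2 l w \<and> f = count_12 l w then \<theta> w else 0)" for w f u
  have "Lam1 l r u f = Lam l r \<inter> {w. 2 * u = count_G2 l w \<and> f = count_12 l w}" for u f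
    using Lam_params(1)[OF _ lr] by (auto simp: Lam1_def count_G2_def count_12_def)
  then have "Ssum \<theta> (Lam1 l r u f) = (\<Sum>w\<in>Lam l r. sel w f u)" for u f
    by (simp add: Ssum_def sel_def sum.inter_restrict[OF finite_Lam])
  then have "(\<Sum>f\<in>{1..r}. \<Sum>u\<in>?U. Ssum \<theta> (Lam1 l r u f)) = (\<Sum>f\<in>{1..r}. \<Sum>w\<in>Lam l r. \<Sum>u\<in>?U. sel w f u)"
    by (simp add: sum.swap[of _ ?U])
  also have "\<dots> = (\<Sum>w\<in>Lam l r. \<Sum>f\<in>{1..r}. \<Sum>u\<in>?U. sel w f u)"
    by (rule sum.swap)
  also have "\<dots> = (\<Sum>w\<in>Lam l r. \<theta> w)"
  proof (rule sum.cong[OF refl])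
    fix w assume w: "w \<in> Lam l r"
    note P = Lam_params[OF w lr]
    have "sel w f u = (if u = count_G2 l w div 2 then (if f = count_12 l w then \<theta> w else 0) else 0)"
      for f u using P(4) by (auto simp: sel_def elim!: evenE)
    moreover have "finite ?U" by (rule finite_subset[of _ "{..l}"]) auto
    ultimately have "(\<Sum>u\<in>?U. sel w f u) = (if f = count_12 l w then \<theta> w else 0)" for f
      using P(5) by (simp add: sum.delta)
    then show "(\<Sum>f\<in>{1..r}. \<Sum>u\<in>?U. sel w f u) = \<theta> w"
      using P(2,3) by (simp add: sum.delta)
  qed
  finally show ?thesis by (simp add: Ssum_def)
qed

theorem lemma1:
  fixes \<alpha> p :: real and X :: "nat \<Rightarrow> real" and l r :: nat
  assumes "0 < \<alpha>" and "\<alpha> < 1" and "0 < p" and "(l, r) \<noteq> (0, 0)"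
  shows "Ssum (theta1 \<alpha> p X) (Lam l r) =
           (\<Sum>f\<in>{1..r}. \<Sum>u\<in>{u. u + r \<le> l}. Ssum (theta1 \<alpha> p X) (Lam1 l r u f)) \<and>
         Ssum (theta2 \<alpha> p X) (Lam l r) =
           (\<Sum>f\<in>{1..r}. \<Sum>u\<in>{u. u + r \<le> l}. Ssum (theta2 \<alpha> p X) (Lam1 l r u f)) \<and>
         (\<forall>u f. 1 \<le> f \<and> f \<le> r \<and> u + r \<le> l \<longrightarrow>
           Ssum (theta1 \<alpha> p X) (Lam1 l r u f) =
             inverse \<alpha> * real ((r - 1) choose (f - 1)) *
             Ssum (theta1 \<alpha> p X) (Lam2 (f + u) f) *
             Ssum (theta1 \<alpha> p X) (Lam (l - u - f) (r - f))) \<and>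
         (\<forall>u f. 1 \<le> f \<and> f \<le> r \<and> u + r \<le> l \<longrightarrow>
           Ssum (theta2 \<alpha> p X) (Lam1 l r u f) =
             inverse (1 - \<alpha>) * real ((r - 1) choose (f - 1)) *
             Ssum (theta2 \<alpha> p X) (Lam2 (f + u) f) *
             Ssum (theta2 \<alpha> p X) (Lam (l - u - f) (r - f)))"
proof -
  have "\<alpha> \<noteq> 0" "1 - \<alpha> \<noteq> 0" using assms(1,2) by auto
  note factor1 = Ssum_Lam1_factor[where \<theta> = "theta1 \<alpha> p X" and c = \<alpha>,
      OF _ _ _ \<open>\<alpha> \<noteq> 0\<close> theta_branch_rest(1)]
  note factor2 = Ssum_Lam1_factor[where \<theta> = "theta2 \<alpha> p X" and c = "1 - \<alpha>",
      OF _ _ _ \<open>1 - \<alpha> \<noteq> 0\<close> theta_branch_rest(2)]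
  show ?thesis using Ssum_Lam_partition[OF assms(4)] factor1 factor2 by blast
qed

end
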